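(* Let $n\ge2$ and let $C$ be a curve in $\mathcal{C}\cap\mathcal{T}_n$, bounding the domain $D$. (1) If $\Pi$ is non-decreasing on $[0,\pi/n]$, then the skeleton of $C$ is $G_n(\{0\}\times[-y_0,0])$, where $-y_0=\Pi(0)=\lim_{\theta\searrow0}\Pi(\theta)$. (2) If the skeleton of $C$ is $G_n(\{0\}\times[-y,0])$ for some $y\ge0$, then $\Pi$ is non-decreasing on $[0,\pi/n]$.
   Context: Let $\mathcal{C}$ be the set of smooth closed simple strictly convex (positive curvature) curves in $\mathbb{R}^2$, each parametrized by $\theta\in\mathbb{T}=\mathbb{R}/2\pi\mathbb{Z}$ so that the unit tangent at $C(\theta)$ is $(\cos\theta,\sin\theta)$ and the outward normal is $\nu(\theta)=(\sin\theta,-\cos\theta)$. Let $\Delta$ be the vertical axis $\{0\}\times\mathbb{R}$, $\mathcal{T}_n$ the set of closed curves symmetric with respect to $\Delta$ and invariant by the rotation $R_{2\pi/n}$ of angle $2\pi/n$ about the origin, and $G_n$ the group of isometries generated by the reflection across $\Delta$ and $R_{2\pi/n}$. For $C\in\mathcal{C}\cap\mathcal{T}_n$ and $\theta\in(0,\pi/n]$, $(0,\Pi(\theta))$ is the intersection of the normal line to $C$ at $C(\theta)$ with $\Delta$; $\Pi(0)$ denotes $\lim_{\theta\searrow0}\Pi(\theta)$. The skeleton of $C$ is the cut locus of the distance to $C$ inside $\bar D$, i.e. the closure of the set of points of $D$ at which the distance function to $C$ is not differentiable. *)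

theory Defs
  imports "HOL-Analysis.Analysis"
begin

type_synonym pt = "real \<times> real"

definition smooth_curve :: "(real \<Rightarrow> pt) \<Rightarrow> bool" where
  "smooth_curve C \<longleftrightarrow> (\<exists>Dk :: nat \<Rightarrow> real \<Rightarrow> pt. Dk 0 = C \<and>
     (\<forall>k t. (Dk k has_vector_derivative Dk (Suc k) t) (at t)))"

text \<open>The class C: smooth, closed (2pi-periodic in the tangent angle), simple,
  parametrized by the tangent angle with positive curvature, i.e.
  C'(theta) = rho(theta) (cos theta, sin theta) with rho > 0.\<close>
definition curve_class :: "(real \<Rightarrow> pt) \<Rightarrow> bool" where
  "curve_class C \<longleftrightarrow> smooth_curve C \<and>
     (\<forall>t. C (t + 2 * pi) = C t) \<and>
     inj_on C {0..<2 * pi} \<and>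
     (\<exists>\<rho>. \<forall>t. \<rho> t > 0 \<and> (C has_vector_derivative (\<rho> t *\<^sub>R (cos t, sin t))) (at t))"

definition curve_image :: "(real \<Rightarrow> pt) \<Rightarrow> pt set" where
  "curve_image C = C ` {0..2 * pi}"

definition domain :: "(real \<Rightarrow> pt) \<Rightarrow> pt set" where
  "domain C = inside (curve_image C)"

definition reflD :: "pt \<Rightarrow> pt" where
  "reflD p = (- fst p, snd p)"

definition rot :: "real \<Rightarrow> pt \<Rightarrow> pt" where
  "rot a p = (cos a * fst p - sin a * snd p, sin a * fst p + cos a * snd p)"

definition sym_class :: "nat \<Rightarrow> (real \<Rightarrow> pt) \<Rightarrow> bool" where
  "sym_class n C \<longleftrightarrow> reflD ` curve_image C = curve_image C \<and>
     rot (2 * pi / real n) ` curve_image C = curve_image C"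

text \<open>The group G_n generated by the reflection across the vertical axis and
  the rotation of angle 2pi/n (both of finite order, so the generated monoid is the group).\<close>
inductive_set Gn :: "nat \<Rightarrow> (pt \<Rightarrow> pt) set" for n :: nat where
  Gn_id: "id \<in> Gn n"
| Gn_refl: "g \<in> Gn n \<Longrightarrow> reflD \<circ> g \<in> Gn n"
| Gn_rot: "g \<in> Gn n \<Longrightarrow> rot (2 * pi / real n) \<circ> g \<in> Gn n"

definition Gn_orbit :: "nat \<Rightarrow> pt set \<Rightarrow> pt set" where
  "Gn_orbit n S = (\<Union>g\<in>Gn n. g ` S)"

definition outer_normal :: "real \<Rightarrow> pt" where
  "outer_normal t = (sin t, - cos t)"

text \<open>Pi(theta): ordinate of the intersection of the normal line at C(theta) with the
  vertical axis (used for theta in (0, pi/n]).\<close>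
definition PiC :: "(real \<Rightarrow> pt) \<Rightarrow> real \<Rightarrow> real" where
  "PiC C t = (THE y. \<exists>s::real. C t + s *\<^sub>R outer_normal t = (0, y))"

definition PiC_ext :: "(real \<Rightarrow> pt) \<Rightarrow> real \<Rightarrow> real" where
  "PiC_ext C t = (if t = 0 then Lim (at_right 0) (PiC C) else PiC C t)"

definition skeleton :: "(real \<Rightarrow> pt) \<Rightarrow> pt set" where
  "skeleton C = closure {p \<in> domain C.
      \<not> ((\<lambda>q. infdist q (curve_image C)) differentiable (at p))}"

end

theory Submission
  imports Defs
begin

text \<open>
  Let \<open>h(\<theta>) = \<langle>C(\<theta>), \<nu>(\<theta>)\<rangle>\<close> be the support function of \<open>C\<close>; then \<open>h' = \<langle>C, \<tau>\<rangle>\<close>,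
  \<open>h'' + h = \<rho> > 0\<close>, and \<open>\<Pi>(\<theta>) = h'(\<theta>) / sin \<theta>\<close>.  For a point \<open>p\<close> let
  \<open>\<Phi>(p) = min\<^sub>\<theta> (h(\<theta>) - \<langle>p, \<nu>(\<theta>)\<rangle>)\<close>.  Then \<open>\<Phi>\<close> is positive exactly on \<open>D\<close>, where it is
  the distance to \<open>C\<close>, and it is differentiable at \<open>p\<close> iff the minimising angle is unique
  modulo \<open>2\<pi>\<close>; so the skeleton is the closure of the points of \<open>D\<close> with two minimising angles.

  Since \<open>h\<close> is \<open>G\<^sub>n\<close>-invariant it suffices to take \<open>p = r \<nu>(a)\<close> with \<open>a\<close> in the chamber
  \<open>[0, \<pi>/n]\<close>, and then a minimising angle \<open>t\<close> can be taken in the same chamber.  It is a zero of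
  \<open>h'(t) + r sin (t - a) = sin t (\<Pi>(t) + r cos a) - r sin a cos t\<close>.

  (1) If \<open>\<Pi>\<close> is non-decreasing, this expression divided by \<open>sin t\<close> is strictly increasing
  when \<open>a > 0\<close>, so the minimiser is unique off the axis; on the axis \<open>a = 0\<close> it is unique iff
  \<open>r > -\<Pi>(0)\<close>, while for \<open>r < -\<Pi>(0)\<close> both \<open>t\<close> and \<open>-t\<close> minimise.

  (2) Suppose \<open>\<Pi>(\<theta>\<^sub>1) > \<Pi>(\<theta>\<^sub>2)\<close> with \<open>\<theta>\<^sub>1 < \<theta>\<^sub>2\<close>, and move \<open>p\<close> up the vertical line \<open>x = \<epsilon>\<close>,
  from where it enters \<open>D\<close> to the wall \<open>a = \<pi>/n\<close> of the chamber.  If the skeleton is a star,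
  the minimising angle is unique, hence continuous, along this path and runs from below
  \<open>\<theta>\<^sub>1\<close> to \<open>\<pi>/n\<close>; so it takes the values \<open>\<theta>\<^sub>1\<close> and \<open>\<theta>\<^sub>2\<close>, at heights
  \<open>y\<^sub>i = \<Pi>(\<theta>\<^sub>i) - \<epsilon> cot \<theta>\<^sub>i\<close>.  Minimising angles are monotone in \<open>p\<close>, which forces
  \<open>y\<^sub>1 \<le> y\<^sub>2\<close>; this is false for small \<open>\<epsilon>\<close>.
\<close>

section \<open>Angles, normal coordinates and rotations\<close>

definition normal_coord :: "pt \<Rightarrow> real \<Rightarrow> real" where
  "normal_coord q t = fst q * sin t - snd q * cos t"

definition angle_dist :: "real \<Rightarrow> real \<Rightarrow> real" where
  "angle_dist t s = \<bar>sin t - sin s\<bar> + \<bar>cos t - cos s\<bar>"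

definition rot_step :: "nat \<Rightarrow> real" where "rot_step n = 2 * pi / real n"

lemma obtain_angle_near:
  obtains k :: int where "\<theta> - pi \<le> t - 2 * pi * k" "t - 2 * pi * k \<le> \<theta> + pi"
proof -
  define k where "k = floor ((t - \<theta> + pi) / (2 * pi))"
  have a: "real_of_int k \<le> (t - \<theta> + pi) / (2 * pi)" unfolding k_def by linarith
  have b: "(t - \<theta> + pi) / (2 * pi) < real_of_int k + 1" unfolding k_def by linarith
  have "2 * pi * real_of_int k \<le> t - \<theta> + pi" using a pi_gt_zero by (simp add: field_simps)
  moreover have "t - \<theta> + pi < 2 * pi * real_of_int k + 2 * pi" using b pi_gt_zero by (simp add: field_simps)
  ultimately show ?thesis using that[of k] by linarith
qed

lemma obtain_angle_in_period:
  obtains k :: int where "0 \<le> t - 2 * pi * k" "t - 2 * pi * k < 2 * pi"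
proof -
  define k where "k = floor (t / (2 * pi))"
  have a: "real_of_int k \<le> t / (2 * pi)" unfolding k_def by linarith
  have b: "t / (2 * pi) < real_of_int k + 1" unfolding k_def by linarith
  have "2 * pi * real_of_int k \<le> t" using a pi_gt_zero by (simp add: field_simps)
  moreover have "t < 2 * pi * real_of_int k + 2 * pi" using b pi_gt_zero by (simp add: field_simps)
  ultimately show ?thesis using that[of k] by linarith
qed

lemma obtain_same_angle_in_period:
  obtains t' where "t' \<in> {0..2*pi}" "sin t' = sin t" "cos t' = cos t"
proof -
  obtain k :: int where k: "0 \<le> t - 2 * pi * k" "t - 2 * pi * k < 2 * pi" by (rule obtain_angle_in_period)
  have "sin t = sin (t - 2 * pi * k) \<and> cos t = cos (t - 2 * pi * k)"
    by (rule sin_cos_eq_iff[THEN iffD2]) (intro exI[of _ k], simp)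
  then show ?thesis using that[of "t - 2 * pi * k"] k by auto
qed

lemma same_angle_affine_iff:
  assumes e: "e = 1 \<or> e = (-1::real)"
  shows "(sin (e * s1 + b) = sin (e * s2 + b) \<and> cos (e * s1 + b) = cos (e * s2 + b))
     \<longleftrightarrow> (sin s1 = sin s2 \<and> cos s1 = cos s2)"
proof
  assume "sin (e * s1 + b) = sin (e * s2 + b) \<and> cos (e * s1 + b) = cos (e * s2 + b)"
  then obtain j :: int where j: "e * s1 + b = e * s2 + b + 2 * pi * j" using sin_cos_eq_iff by metis
  show "sin s1 = sin s2 \<and> cos s1 = cos s2"
  proof (cases "e = 1")
    case True then have "s1 = s2 + 2 * pi * j" using j by simp
    then show ?thesis by (metis sin_cos_eq_iff)
  next
    case False then have "e = -1" using e by simp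
    then have "s1 = s2 + 2 * pi * real_of_int (- j)" using j by simp
    then show ?thesis by (metis sin_cos_eq_iff)
  qed
next
  assume "sin s1 = sin s2 \<and> cos s1 = cos s2"
  then obtain j :: int where j: "s1 = s2 + 2 * pi * j" using sin_cos_eq_iff by metis
  show "sin (e * s1 + b) = sin (e * s2 + b) \<and> cos (e * s1 + b) = cos (e * s2 + b)"
  proof (cases "e = 1")
    case True then have "e * s1 + b = e * s2 + b + 2 * pi * j" using j by simp
    then show ?thesis by (metis sin_cos_eq_iff)
  next
    case False then have "e = -1" using e by simp
    then have "e * s1 + b = e * s2 + b + 2 * pi * real_of_int (- j)" using j by (simp add: algebra_simps)
    then show ?thesis by (metis sin_cos_eq_iff)
  qed
qed

lemma cos_eq_cases:
  assumes "cos x = cos y"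
  shows "(sin x = sin y \<and> cos x = cos y) \<or> (\<exists>k::int. x = - y + 2 * pi * k)"
proof -
  have "(sin x)^2 = (sin y)^2" using assms sin_squared_eq[of x] sin_squared_eq[of y] by simp
  then have "sin x = sin y \<or> sin x = - sin y" by (simp add: power2_eq_iff)
  then show ?thesis
  proof
    assume "sin x = sin y" then show ?thesis using assms by simp
  next
    assume "sin x = - sin y"
    then have "sin x = sin (- y) \<and> cos x = cos (- y)" using assms by simp
    then show ?thesis using sin_cos_eq_iff by blast
  qed
qed

lemma cot_strict_decreasing:
  assumes "0 < s" "s < s'" "s' < pi"
  shows "cos s' / sin s' < cos s / sin s"
proof -
  have ss: "sin s > 0" "sin s' > 0" using assms by (auto intro!: sin_gt_zero)
  have "sin (s' - s) > 0" using assms by (intro sin_gt_zero) auto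
  then have "cos s * sin s' - cos s' * sin s > 0" by (simp add: sin_diff algebra_simps)
  then show ?thesis using ss by (simp add: field_simps)
qed

lemma abs_diff_le_folded:
  fixes a b c :: real and M :: int
  assumes c: "c > 0" and a: "0 \<le> a" "a \<le> c / 2" and b: "0 \<le> b" "b \<le> c / 2" and e: "e = 1 \<or> e = -1"
  shows "\<bar>b - a\<bar> \<le> \<bar>e * b - a + M * c\<bar>"
proof -
  define X where "X = real_of_int M * c"
  consider "M = 0" | "M = 1" | "M \<ge> 2" | "M \<le> -1" by linarith
  then have "X = 0 \<or> X = c \<or> 2 * c \<le> X \<or> X \<le> - c"
  proof cases
    case 3
    then have "2 * c \<le> X" unfolding X_def using c by (intro mult_right_mono) auto
    then show ?thesis by simp
  next
    case 4
    then have "real_of_int M * c \<le> -1 * c" using c by (intro mult_right_mono) auto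
    then show ?thesis unfolding X_def by simp
  qed (simp_all add: X_def)
  then show ?thesis unfolding X_def[symmetric] using e a b c by (auto simp: abs_if)
qed

lemma norm_pt_eq: "norm (p::pt) = sqrt ((fst p)^2 + (snd p)^2)"
  by (cases p) (simp add: norm_Pair)

lemma abs_normal_coord_le: "\<bar>normal_coord v t\<bar> \<le> norm v"
proof -
  have "(normal_coord v t)^2 \<le> (fst v)^2 + (snd v)^2"
  proof -
    have "(normal_coord v t)^2 + (fst v * cos t + snd v * sin t)^2 = ((fst v)^2 + (snd v)^2) * ((sin t)^2 + (cos t)^2)"
      unfolding normal_coord_def by algebra
    then show ?thesis by simp (metis le_add_same_cancel1 zero_le_power2)
  qed
  then have "sqrt ((normal_coord v t)^2) \<le> sqrt ((fst v)^2 + (snd v)^2)" by (rule real_sqrt_le_mono)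
  then show ?thesis by (simp add: norm_pt_eq)
qed

lemma normal_coord_diff: "normal_coord (p - q) t = normal_coord p t - normal_coord q t"
  unfolding normal_coord_def by (simp add: algebra_simps)

lemma normal_coord_add: "normal_coord (p + q) t = normal_coord p t + normal_coord q t"
  unfolding normal_coord_def by (simp add: algebra_simps)

lemma normal_coord_scaleR: "normal_coord (a *\<^sub>R p) t = a * normal_coord p t"
  unfolding normal_coord_def by (simp add: algebra_simps)

lemma bounded_linear_normal_coord: "bounded_linear (\<lambda>v::pt. - normal_coord v t)"
proof (rule bounded_linear_intro[of _ 1])
  fix x y :: pt show "- normal_coord (x + y) t = - normal_coord x t + - normal_coord y t" by (simp add: normal_coord_add)
next
  fix r and x :: pt show "- normal_coord (r *\<^sub>R x) t = r *\<^sub>R - normal_coord x t" by (simp add: normal_coord_scaleR)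
next
  fix x :: pt show "norm (- normal_coord x t) \<le> norm x * 1" using abs_normal_coord_le[of x t] by simp
qed

lemma has_derivative_le_of_upper_bound:
  fixes f :: "'a::real_normed_vector \<Rightarrow> real"
  assumes f: "(f has_derivative D) (at p)" and le: "\<And>s. 0 < s \<Longrightarrow> f (p + s *\<^sub>R v) \<le> f p + s * c"
  shows "D v \<le> c"
proof (rule ccontr)
  assume "\<not> D v \<le> c"
  have lin: "D (s *\<^sub>R v) = s * D v" for s
    using linear.scaleR[OF bounded_linear.linear[OF has_derivative_bounded_linear[OF f]]] by simp
  have "((\<lambda>s. p + s *\<^sub>R v) has_derivative (\<lambda>s. s *\<^sub>R v)) (at 0)"
    by (auto intro!: derivative_eq_intros)
  then have "((\<lambda>s. f (p + s *\<^sub>R v)) has_derivative (\<lambda>s. D (s *\<^sub>R v))) (at 0)"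
    using has_derivative_compose[of "\<lambda>s. p + s *\<^sub>R v" _ 0 UNIV f D] f by simp
  then have "((\<lambda>s. f (p + s *\<^sub>R v) - s * c) has_derivative (\<lambda>s. s * D v - s * c)) (at 0)"
    unfolding lin by (auto intro!: derivative_eq_intros)
  then have "((\<lambda>s. f (p + s *\<^sub>R v) - s * c) has_real_derivative (D v - c)) (at 0)"
    unfolding has_field_derivative_def by (rule has_derivative_eq_rhs) (auto simp: algebra_simps)
  moreover have "0 < D v - c" using \<open>\<not> D v \<le> c\<close> by simp
  ultimately obtain d where "d > 0"
    and d: "\<forall>h>0. h < d \<longrightarrow> f (p + 0 *\<^sub>R v) - 0 * c < f (p + (0 + h) *\<^sub>R v) - (0 + h) * c"
    by (blast dest: DERIV_pos_inc_right)
  then have "f p < f (p + (d / 2) *\<^sub>R v) - d / 2 * c" using d[rule_format, of "d / 2"] by simp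
  then show False using le[of "d / 2"] \<open>d > 0\<close> by simp
qed

lemma normal_coord_angle_lipschitz: "\<bar>normal_coord v t - normal_coord v s\<bar> \<le> norm v * angle_dist t s"
proof -
  have "normal_coord v t - normal_coord v s = fst v * (sin t - sin s) - snd v * (cos t - cos s)"
    unfolding normal_coord_def by (simp add: algebra_simps)
  also have "\<bar>\<dots>\<bar> \<le> \<bar>fst v\<bar> * \<bar>sin t - sin s\<bar> + \<bar>snd v\<bar> * \<bar>cos t - cos s\<bar>"
    by (simp add: abs_mult[symmetric] abs_triangle_ineq4)
  also have "\<dots> \<le> norm v * \<bar>sin t - sin s\<bar> + norm v * \<bar>cos t - cos s\<bar>"
  proof -
    have "norm (fst v) \<le> norm (fst v, snd v)" "norm (snd v) \<le> norm (fst v, snd v)"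
      by (rule norm_fst_le, rule norm_snd_le)
    then have "\<bar>fst v\<bar> \<le> norm v" "\<bar>snd v\<bar> \<le> norm v" by simp_all
    then show ?thesis by (intro add_mono mult_right_mono) auto
  qed
  finally show ?thesis by (simp add: angle_dist_def algebra_simps)
qed

lemma norm_pt_sq_normal_coord: "(norm (v::pt))^2 = (normal_coord v t)^2 + (fst v * cos t + snd v * sin t)^2"
proof -
  have "(normal_coord v t)^2 + (fst v * cos t + snd v * sin t)^2 = ((fst v)^2 + (snd v)^2) * ((sin t)^2 + (cos t)^2)"
    unfolding normal_coord_def by algebra
  then show ?thesis by (simp add: norm_pt_eq)
qed

lemma rotated_linear_system_zero:
  fixes a b s co :: real
  assumes "a * s - b * co = 0" "a * co + b * s = 0" "s^2 + co^2 = 1"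
  shows "a = 0 \<and> b = 0"
proof -
  have "a = 0" using assms by algebra
  moreover have "b = 0" using assms by algebra
  ultimately show ?thesis by simp
qed

lemma obtain_normal_direction:
  assumes "p \<noteq> 0"
  obtains t where "normal_coord p t = norm p"
proof -
  have np: "norm p > 0" using assms by simp
  have nsq: "(norm p)^2 = (fst p)^2 + (snd p)^2" by (simp add: norm_pt_eq)
  have pos: "(fst p)^2 + (snd p)^2 > 0" using np nsq by (metis zero_less_power)
  have "(- snd p / norm p)^2 + (fst p / norm p)^2 = ((fst p)^2 + (snd p)^2) / (norm p)^2"
    by (simp add: power_divide add_divide_distrib)
  also have "\<dots> = 1" by (simp only: nsq) (rule divide_self, use pos in linarith)
  finally have "(- snd p / norm p)^2 + (fst p / norm p)^2 = 1" .
  then obtain t where t: "- snd p / norm p = cos t" "fst p / norm p = sin t"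
    using sincos_total_2pi by metis
  have "normal_coord p t = ((fst p)^2 + (snd p)^2) / norm p"
    unfolding normal_coord_def t[symmetric] by (simp add: power2_eq_square add_divide_distrib)
  also have "\<dots> = (norm p)^2 / norm p" using nsq by simp
  also have "\<dots> = norm p" using np by (simp add: power2_eq_square)
  finally show ?thesis using that by blast
qed

lemma norm_outer_normal: "norm (outer_normal a) = 1"
  unfolding outer_normal_def by (simp add: norm_Pair)

lemma obtain_polar:
  obtains r a where "r \<ge> 0" "p = r *\<^sub>R outer_normal a"
proof (cases "p = 0")
  case True then show ?thesis using that[of 0 0] by simp
next
  case False
  obtain t where t: "normal_coord p t = norm p" using obtain_normal_direction[OF False] by blast
  have "(norm p)^2 = (normal_coord p t)^2 + (fst p * cos t + snd p * sin t)^2" by (rule norm_pt_sq_normal_coord)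
  then have w: "fst p * cos t + snd p * sin t = 0" using t by simp
  have sc1: "(sin t)^2 + (cos t)^2 = 1" by simp
  have "fst p = normal_coord p t * sin t + (fst p * cos t + snd p * sin t) * cos t"
    using sc1 unfolding normal_coord_def by algebra
  moreover have "snd p = - normal_coord p t * cos t + (fst p * cos t + snd p * sin t) * sin t"
    using sc1 unfolding normal_coord_def by algebra
  ultimately have "p = norm p *\<^sub>R outer_normal t"
    using w t unfolding outer_normal_def by (simp add: prod_eq_iff)
  then show ?thesis using that[of "norm p" t] by simp
qed

lemma rot_rot: "rot a (rot b q) = rot (a + b) q"
  unfolding rot_def by (simp add: sin_add cos_add prod_eq_iff) algebra

lemma rot_zero: "rot 0 q = q" unfolding rot_def by simp


lemma rot_zero_id: "rot 0 = id" unfolding rot_def by (simp add: fun_eq_iff)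

lemma rot_comp: "rot a \<circ> rot b = rot (a + b)" using rot_rot by (simp add: fun_eq_iff)

lemma reflD_rot: "reflD \<circ> rot a = rot (- a) \<circ> reflD"
  unfolding rot_def reflD_def by (simp add: fun_eq_iff)

lemma reflD_reflD: "reflD \<circ> reflD = id" unfolding reflD_def by (simp add: fun_eq_iff)

lemma rot_axis: "rot a (0, s) = (- s) *\<^sub>R outer_normal a"
  unfolding rot_def outer_normal_def by simp

lemma reflD_axis: "reflD (0, s) = (0, s)" unfolding reflD_def by simp

lemma normal_coord_rot: "normal_coord (rot a q) (t + a) = normal_coord q t"
proof -
  have "normal_coord (rot a q) (t + a) = normal_coord q t * ((sin a)^2 + (cos a)^2)"
    by (simp only: normal_coord_def rot_def fst_conv snd_conv sin_add cos_add) algebra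
  then show ?thesis by simp
qed

lemma normal_coord_reflD: "normal_coord (reflD q) t = normal_coord q (- t)"
  unfolding normal_coord_def reflD_def by simp

lemma two_pi_eq_rot_step: "0 < n \<Longrightarrow> 2 * pi = real n * rot_step n"
  unfolding rot_step_def by simp

lemma periodic_int:
  assumes "\<And>t. f (t + c) = f t"
  shows "f (t + real_of_int k * c) = f t"
proof -
  have nat: "f (s + real m * c) = f s" for s m
  proof (induction m)
    case (Suc m)
    have "f (s + real (Suc m) * c) = f ((s + real m * c) + c)" by (simp add: algebra_simps)
    then show ?case using assms Suc by simp
  qed simp
  show ?thesis
  proof (cases "k \<ge> 0")
    case True
    then show ?thesis using nat[of t "nat k"] by simp
  next
    case False
    then have e: "(t + real_of_int k * c) + real (nat (- k)) * c = t" by (simp add: algebra_simps)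
    show ?thesis using nat[of "t + real_of_int k * c" "nat (- k)"] unfolding e by simp
  qed
qed

section \<open>The group \<open>G\<^sub>n\<close> and the star of the vertical axis\<close>

lemma Gn_cases:
  assumes "g \<in> Gn n"
  shows "\<exists>k::int. g = rot (real_of_int k * rot_step n) \<or> g = rot (real_of_int k * rot_step n) \<circ> reflD"
  using assms
proof (induction rule: Gn.induct)
  case Gn_id
  show ?case by (intro exI[of _ 0]) (simp add: rot_zero_id)
next
  case (Gn_refl g)
  then obtain k :: int where k: "g = rot (real_of_int k * rot_step n) \<or> g = rot (real_of_int k * rot_step n) \<circ> reflD" by blast
  then show ?case
  proof
    assume g: "g = rot (real_of_int k * rot_step n)"
    have "reflD \<circ> g = rot (real_of_int (- k) * rot_step n) \<circ> reflD" unfolding g reflD_rot by simp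
    then show ?case by blast
  next
    assume g: "g = rot (real_of_int k * rot_step n) \<circ> reflD"
    have "reflD \<circ> g = rot (- (real_of_int k * rot_step n)) \<circ> (reflD \<circ> reflD)"
      unfolding g by (metis comp_assoc reflD_rot)
    also have "\<dots> = rot (real_of_int (- k) * rot_step n)" by (simp add: reflD_reflD)
    finally show ?case by blast
  qed
next
  case (Gn_rot g)
  then obtain k :: int where k: "g = rot (real_of_int k * rot_step n) \<or> g = rot (real_of_int k * rot_step n) \<circ> reflD" by blast
  have ang: "2 * pi / real n + real_of_int k * rot_step n = real_of_int (k + 1) * rot_step n"
    unfolding rot_step_def by (simp add: add_divide_distrib distrib_right)
  have r: "rot (2 * pi / real n) \<circ> rot (real_of_int k * rot_step n) = rot (real_of_int (k + 1) * rot_step n)"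
    by (simp only: rot_comp ang)
  from k show ?case
  proof
    assume g: "g = rot (real_of_int k * rot_step n)"
    show ?case using r unfolding g by blast
  next
    assume g: "g = rot (real_of_int k * rot_step n) \<circ> reflD"
    have "rot (2 * pi / real n) \<circ> g = rot (real_of_int (k + 1) * rot_step n) \<circ> reflD"
      unfolding g using r by (simp add: comp_assoc[symmetric])
    then show ?case by blast
  qed
qed

lemma rot_nat_Gn: "rot (real k * rot_step n) \<in> Gn n"
proof (induction k)
  case 0
  have e: "rot (real 0 * rot_step n) = id" using rot_zero_id by simp
  show ?case using e Gn.Gn_id by metis
next
  case (Suc k)
  have ang: "2 * pi / real n + real k * rot_step n = real (Suc k) * rot_step n"
    unfolding rot_step_def by (simp add: add_divide_distrib distrib_right)
  have "rot (real (Suc k) * rot_step n) = rot (2 * pi / real n) \<circ> rot (real k * rot_step n)"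
    by (simp only: rot_comp ang)
  then show ?case by (simp only:) (rule Gn.Gn_rot[OF Suc])
qed

lemma obtain_nat_rotation:
  assumes "0 < n"
  obtains k' :: nat where "k' < n"
    "outer_normal (real_of_int k * rot_step n) = outer_normal (real k' * rot_step n)"
proof -
  define k' where "k' = nat (k mod int n)"
  have "k' < n" unfolding k'_def using assms by (simp add: nat_less_iff)
  have "k = k div int n * int n + int k'" unfolding k'_def using assms by simp
  then have "real_of_int k = real_of_int (k div int n) * real n + real k'"
    by (metis of_int_add of_int_mult of_int_of_nat_eq)
  then have "real_of_int k * rot_step n = real k' * rot_step n + 2 * pi * real_of_int (k div int n)"
    using two_pi_eq_rot_step[OF assms] by (simp add: algebra_simps)
  then have "sin (real_of_int k * rot_step n) = sin (real k' * rot_step n)"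
    "cos (real_of_int k * rot_step n) = cos (real k' * rot_step n)"
    using sin_cos_eq_iff by blast+
  then show ?thesis using that[OF \<open>k' < n\<close>] unfolding outer_normal_def by simp
qed

definition axis_star :: "nat \<Rightarrow> real \<Rightarrow> pt set" where
  "axis_star n L = (\<Union>k<n. (\<lambda>r. r *\<^sub>R outer_normal (real k * rot_step n)) ` {0..-L})"

lemma axis_starI:
  assumes "0 \<le> r" "r \<le> - L" "k < n"
  shows "r *\<^sub>R outer_normal (real k * rot_step n) \<in> axis_star n L"
  unfolding axis_star_def using assms by (intro UN_I[of k] imageI) auto

lemma axis_starE:
  assumes "x \<in> axis_star n L"
  obtains r k where "0 \<le> r" "r \<le> - L" "k < n" "x = r *\<^sub>R outer_normal (real k * rot_step n)"
  using assms unfolding axis_star_def by auto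

lemma closed_axis_star: "closed (axis_star n L)"
  unfolding axis_star_def
  by (intro compact_imp_closed compact_UN finite_lessThan compact_continuous_image compact_Icc
      continuous_intros)

lemma Gn_orbit_axis_segment:
  assumes "0 < n"
  shows "Gn_orbit n ({0} \<times> {L..0}) = axis_star n L"
proof
  show "Gn_orbit n ({0} \<times> {L..0}) \<subseteq> axis_star n L"
  proof
    fix x assume "x \<in> Gn_orbit n ({0} \<times> {L..0})"
    then obtain g s where g: "g \<in> Gn n" and s: "L \<le> s" "s \<le> 0" and x: "x = g (0, s)"
      unfolding Gn_orbit_def by auto
    obtain k :: int where "g = rot (real_of_int k * rot_step n) \<or> g = rot (real_of_int k * rot_step n) \<circ> reflD"
      using Gn_cases[OF g] by blast
    then have "x = rot (real_of_int k * rot_step n) (0, s)" using x reflD_axis by auto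
    also have "\<dots> = (- s) *\<^sub>R outer_normal (real_of_int k * rot_step n)" by (rule rot_axis)
    finally have x': "x = (- s) *\<^sub>R outer_normal (real_of_int k * rot_step n)" .
    obtain k' where "k' < n" "outer_normal (real_of_int k * rot_step n) = outer_normal (real k' * rot_step n)"
      using obtain_nat_rotation[OF assms] .
    then show "x \<in> axis_star n L" using x' s axis_starI[of "- s" L k'] by simp
  qed
next
  show "axis_star n L \<subseteq> Gn_orbit n ({0} \<times> {L..0})"
  proof
    fix x assume "x \<in> axis_star n L"
    then obtain r k where r: "0 \<le> r" "r \<le> - L" "k < n" and x: "x = r *\<^sub>R outer_normal (real k * rot_step n)"
      by (rule axis_starE)
    have "x = rot (real k * rot_step n) (0, - r)" using x rot_axis by simp
    moreover have "(0, - r) \<in> {0} \<times> {L..0}" using r by auto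
    ultimately have "x \<in> rot (real k * rot_step n) ` ({0} \<times> {L..0})" by (rule image_eqI)
    then show "x \<in> Gn_orbit n ({0} \<times> {L..0})" unfolding Gn_orbit_def by (rule UN_I[OF rot_nat_Gn])
  qed
qed

section \<open>The support function\<close>

definition curv_radius :: "(real \<Rightarrow> pt) \<Rightarrow> real \<Rightarrow> real" where
  "curv_radius C = (SOME \<rho>. \<forall>t. \<rho> t > 0 \<and> (C has_vector_derivative (\<rho> t *\<^sub>R (cos t, sin t))) (at t))"

definition support_fn :: "(real \<Rightarrow> pt) \<Rightarrow> real \<Rightarrow> real" where
  "support_fn C t = fst (C t) * sin t - snd (C t) * cos t"

definition support_fn' :: "(real \<Rightarrow> pt) \<Rightarrow> real \<Rightarrow> real" where
  "support_fn' C t = fst (C t) * cos t + snd (C t) * sin t"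

locale symmetric_curve =
  fixes n :: nat and C :: "real \<Rightarrow> pt"
  assumes n2: "n \<ge> 2" and cc: "curve_class C" and sc: "sym_class n C"
begin

abbreviation "S \<equiv> curve_image C"

lemma n_pos: "0 < n" using n2 by simp

lemma curv_radius_spec: "curv_radius C t > 0 \<and> (C has_vector_derivative (curv_radius C t *\<^sub>R (cos t, sin t))) (at t)"
proof -
  have "\<exists>\<rho>. \<forall>t. \<rho> t > 0 \<and> (C has_vector_derivative (\<rho> t *\<^sub>R (cos t, sin t))) (at t)"
    using cc unfolding curve_class_def by blast
  from someI_ex[OF this] show ?thesis unfolding curv_radius_def by blast
qed

lemma curv_radius_pos: "curv_radius C t > 0" using curv_radius_spec by blast

lemma curve_has_vector_derivative: "(C has_vector_derivative (curv_radius C t *\<^sub>R (cos t, sin t))) (at t)"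
  using curv_radius_spec by blast

lemma isCont_curve: "isCont C t"
  using curve_has_vector_derivative has_vector_derivative_continuous by blast

lemma continuous_on_curve: "continuous_on A C"
  using isCont_curve continuous_at_imp_continuous_on by blast

lemma fst_curve_has_derivative: "((\<lambda>t. fst (C t)) has_real_derivative (curv_radius C t * cos t)) (at t)"
proof -
  have "((\<lambda>t. fst (C t)) has_derivative (\<lambda>x. fst (x *\<^sub>R (curv_radius C t *\<^sub>R (cos t, sin t))))) (at t)"
    using has_derivative_fst[OF curve_has_vector_derivative[unfolded has_vector_derivative_def]] .
  moreover have "(\<lambda>x. fst (x *\<^sub>R (curv_radius C t *\<^sub>R (cos t, sin t)))) = (*) (curv_radius C t * cos t)"
    by (auto simp: fun_eq_iff)
  ultimately show ?thesis unfolding has_field_derivative_def by simp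
qed

lemma snd_curve_has_derivative: "((\<lambda>t. snd (C t)) has_real_derivative (curv_radius C t * sin t)) (at t)"
proof -
  have "((\<lambda>t. snd (C t)) has_derivative (\<lambda>x. snd (x *\<^sub>R (curv_radius C t *\<^sub>R (cos t, sin t))))) (at t)"
    using has_derivative_snd[OF curve_has_vector_derivative[unfolded has_vector_derivative_def]] .
  moreover have "(\<lambda>x. snd (x *\<^sub>R (curv_radius C t *\<^sub>R (cos t, sin t)))) = (*) (curv_radius C t * sin t)"
    by (auto simp: fun_eq_iff)
  ultimately show ?thesis unfolding has_field_derivative_def by simp
qed

lemma curve_periodic: "C (t + 2 * pi) = C t"
  using cc unfolding curve_class_def by blast

lemma curve_periodic_int: "C (t + 2 * pi * real_of_int k) = C t"
  using periodic_int[of C "2 * pi", OF curve_periodic] by (simp add: mult.commute)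

lemma curve_in_image: "C t \<in> S"
proof -
  obtain k :: int where k: "0 \<le> t - 2 * pi * k" "t - 2 * pi * k < 2 * pi" by (rule obtain_angle_in_period)
  have "C t = C (t - 2 * pi * k)" using curve_periodic_int[of "t - 2 * pi * k" k] by simp
  then show ?thesis unfolding curve_image_def using k by auto
qed

lemma curve_eq_imp_period: "C s = C t \<Longrightarrow> \<exists>k::int. s = t + 2 * pi * k"
proof -
  assume eq: "C s = C t"
  obtain i :: int where i: "0 \<le> s - 2 * pi * i" "s - 2 * pi * i < 2 * pi" by (rule obtain_angle_in_period)
  obtain j :: int where j: "0 \<le> t - 2 * pi * j" "t - 2 * pi * j < 2 * pi" by (rule obtain_angle_in_period)
  have "C (s - 2 * pi * i) = C s" using curve_periodic_int[of "s - 2 * pi * i" i] by simp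
  moreover have "C (t - 2 * pi * j) = C t" using curve_periodic_int[of "t - 2 * pi * j" j] by simp
  moreover have "inj_on C {0..<2 * pi}" using cc unfolding curve_class_def by blast
  moreover have "s - 2 * pi * i \<in> {0..<2 * pi}" "t - 2 * pi * j \<in> {0..<2 * pi}" using i j by auto
  ultimately have "s - 2 * pi * i = t - 2 * pi * j" using eq by (metis inj_onD)
  then have "s = t + 2 * pi * real_of_int (i - j)" by (simp add: algebra_simps)
  then show ?thesis by blast
qed

lemma curve_bounded: "\<exists>M. \<forall>t. norm (C t) \<le> M"
proof -
  have "compact S" unfolding curve_image_def by (rule compact_continuous_image[OF continuous_on_curve compact_Icc])
  then obtain M where "\<forall>q\<in>S. norm q \<le> M" using compact_imp_bounded bounded_iff by metis
  then show ?thesis using curve_in_image by blast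
qed

lemma curve_below_support_line_near:
  assumes "\<theta> - pi \<le> t" "t \<le> \<theta> + pi"
  shows "fst (C t) * sin \<theta> - snd (C t) * cos \<theta> \<le> support_fn C \<theta>"
proof -
  define \<phi> where "\<phi> t = fst (C t) * sin \<theta> - snd (C t) * cos \<theta>" for t
  have d: "(\<phi> has_real_derivative curv_radius C t * sin (\<theta> - t)) (at t)" for t
  proof -
    have "(\<phi> has_real_derivative curv_radius C t * cos t * sin \<theta> - curv_radius C t * sin t * cos \<theta>) (at t)"
      unfolding \<phi>_def by (rule DERIV_diff[OF DERIV_cmult_right[OF fst_curve_has_derivative] DERIV_cmult_right[OF snd_curve_has_derivative]])
    moreover have "curv_radius C t * cos t * sin \<theta> - curv_radius C t * sin t * cos \<theta> = curv_radius C t * sin (\<theta> - t)"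
      by (simp add: sin_diff algebra_simps)
    ultimately show ?thesis by simp
  qed
  show ?thesis
  proof (cases "t \<le> \<theta>")
    case True
    have "\<phi> t \<le> \<phi> \<theta>"
    proof (rule DERIV_nonneg_imp_nondecreasing[OF True])
      fix x assume x: "t \<le> x" "x \<le> \<theta>"
      have "sin (\<theta> - x) \<ge> 0" using x assms by (intro sin_ge_zero) auto
      then show "\<exists>y. DERIV \<phi> x :> y \<and> y \<ge> 0" 
        by (intro exI[of _ "curv_radius C x * sin (\<theta> - x)"] conjI d mult_nonneg_nonneg less_imp_le[OF curv_radius_pos])
    qed
    then show ?thesis unfolding \<phi>_def support_fn_def by simp
  next
    case False
    then have le: "\<theta> \<le> t" by simp
    have "\<phi> t \<le> \<phi> \<theta>"
    proof (rule DERIV_nonpos_imp_nonincreasing[OF le])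
      fix x assume x: "\<theta> \<le> x" "x \<le> t"
      have "sin (x - \<theta>) \<ge> 0" using x assms by (intro sin_ge_zero) auto
      moreover have "sin (\<theta> - x) = - sin (x - \<theta>)" using sin_minus[of "x - \<theta>"] by simp
      ultimately have "sin (\<theta> - x) \<le> 0" by simp
      then show "\<exists>y. DERIV \<phi> x :> y \<and> y \<le> 0"
        by (intro exI[of _ "curv_radius C x * sin (\<theta> - x)"] conjI d mult_nonneg_nonpos less_imp_le[OF curv_radius_pos])
    qed
    then show ?thesis unfolding \<phi>_def support_fn_def by simp
  qed
qed

lemma curve_below_support_line: "fst (C t) * sin \<theta> - snd (C t) * cos \<theta> \<le> support_fn C \<theta>"
proof -
  obtain k :: int where k: "\<theta> - pi \<le> t - 2 * pi * k" "t - 2 * pi * k \<le> \<theta> + pi"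
    by (rule obtain_angle_near)
  have "C t = C (t - 2 * pi * k)" using curve_periodic_int[of "t - 2 * pi * k" k] by simp
  then show ?thesis using curve_below_support_line_near[OF k] by simp
qed

lemma support_fn_eq_normal_coord: "support_fn C t = normal_coord (C t) t"
  unfolding support_fn_def normal_coord_def by simp

lemma image_normal_coord_le: "q \<in> S \<Longrightarrow> normal_coord q t \<le> support_fn C t"
  unfolding curve_image_def normal_coord_def using curve_below_support_line by auto

lemma support_fn_has_derivative: "(support_fn C has_real_derivative support_fn' C t) (at t)"
proof -
  have "((\<lambda>t. fst (C t) * sin t - snd (C t) * cos t) has_real_derivative
     (curv_radius C t * cos t * sin t + fst (C t) * cos t - (curv_radius C t * sin t * cos t - snd (C t) * sin t))) (at t)"
    by (rule DERIV_cong[OF DERIV_diff[OF DERIV_mult[OF fst_curve_has_derivative DERIV_sin] DERIV_mult[OF snd_curve_has_derivative DERIV_cos]]]) (simp add: algebra_simps)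
  then show ?thesis unfolding support_fn_def[abs_def] support_fn'_def by (simp add: algebra_simps)
qed

lemma support_fn'_has_derivative: "(support_fn' C has_real_derivative (curv_radius C t - support_fn C t)) (at t)"
proof -
  have "((\<lambda>t. fst (C t) * cos t + snd (C t) * sin t) has_real_derivative
     (curv_radius C t * cos t * cos t - fst (C t) * sin t + (curv_radius C t * sin t * sin t + snd (C t) * cos t))) (at t)"
    by (rule DERIV_cong[OF DERIV_add[OF DERIV_mult[OF fst_curve_has_derivative DERIV_cos] DERIV_mult[OF snd_curve_has_derivative DERIV_sin]]]) (simp add: algebra_simps)
  moreover have "curv_radius C t * cos t * cos t - fst (C t) * sin t + (curv_radius C t * sin t * sin t + snd (C t) * cos t)
     = curv_radius C t * (cos t * cos t + sin t * sin t) - support_fn C t"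
    unfolding support_fn_def by algebra
  moreover have "cos t * cos t + sin t * sin t = 1"
    by (metis sin_cos_squared_add power2_eq_square add.commute)
  ultimately show ?thesis unfolding support_fn'_def[abs_def] by simp
qed

lemma isCont_support_fn: "isCont (support_fn C) t" using support_fn_has_derivative DERIV_isCont by blast

lemma isCont_support_fn': "isCont (support_fn' C) t" using support_fn'_has_derivative DERIV_isCont by blast

lemma rot_step_pos: "rot_step n > 0" unfolding rot_step_def using n2 by simp

lemma rot_step_half: "rot_step n / 2 = pi / real n" unfolding rot_step_def by simp

lemma wall_pos: "pi / real n > 0" using n2 by simp

lemma wall_le_pi_half: "pi / real n \<le> pi / 2"
  using n2 by (intro divide_left_mono) auto

lemma wall_less_pi: "pi / real n < pi"
proof -
  have "pi / real n \<le> pi / 2" by (rule wall_le_pi_half)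
  then show ?thesis using pi_gt_zero by linarith
qed

lemma sin_pos_chamber: "0 < s \<Longrightarrow> s \<le> pi / real n \<Longrightarrow> sin s > 0"
  using wall_less_pi by (intro sin_gt_zero) auto

lemma rot_step_not_period: "rot_step n \<noteq> 2 * pi * real_of_int k"
proof
  assume "rot_step n = 2 * pi * real_of_int k"
  then have e: "2 * pi = real n * (2 * pi * k)" using two_pi_eq_rot_step[OF n_pos] by simp
  have "pi * (1 - real n * real_of_int k) = 0" using e by algebra
  then have "1 - real n * real_of_int k = 0" using pi_gt_zero by simp
  then have "real_of_int (1 - int n * k) = 0" by simp
  then have "1 - int n * k = 0" by (simp only: of_int_eq_0_iff)
  then have "int n * k = 1" by simp
  then have "int n dvd int 1" by (metis dvd_triv_left of_nat_1)
  then have "n dvd 1" by (simp only: int_dvd_int_iff)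
  then show False using n2 by simp
qed

lemma image_reflD: "q \<in> S \<Longrightarrow> reflD q \<in> S"
  using sc unfolding sym_class_def by blast

lemma image_rot: "q \<in> S \<Longrightarrow> rot (rot_step n) q \<in> S"
  using sc unfolding sym_class_def rot_step_def by blast

lemma image_rot_neg: "q \<in> S \<Longrightarrow> rot (- rot_step n) q \<in> S"
proof -
  assume "q \<in> S"
  then obtain q' where "q' \<in> S" "q = rot (rot_step n) q'"
    using sc unfolding sym_class_def rot_step_def by blast
  then have "rot (- rot_step n) q = q'" using rot_rot[of "- rot_step n" "rot_step n" q'] rot_zero by simp
  then show ?thesis using \<open>q' \<in> S\<close> by simp
qed

lemma image_rot_iter: "q \<in> S \<Longrightarrow> rot (- (real k * rot_step n)) q \<in> S"
proof (induction k)
  case 0 then show ?case using rot_zero by simp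
next
  case (Suc k)
  have "rot (- (real (Suc k) * rot_step n)) q = rot (- rot_step n) (rot (- (real k * rot_step n)) q)"
    using rot_rot[of "- rot_step n" "- (real k * rot_step n)" q] by (simp add: algebra_simps)
  also have "\<dots> \<in> S" using image_rot_neg Suc by simp
  finally show ?case .
qed

lemma support_fn_even: "support_fn C (- t) = support_fn C t"
proof -
  have le: "support_fn C (- s) \<le> support_fn C s" for s
  proof -
    have "support_fn C (- s) = normal_coord (C (- s)) (- s)" by (rule support_fn_eq_normal_coord)
    also have "\<dots> = normal_coord (reflD (C (- s))) s" using normal_coord_reflD[of "C (-s)" s] by simp
    also have "\<dots> \<le> support_fn C s" by (rule image_normal_coord_le[OF image_reflD[OF curve_in_image]])
    finally show ?thesis .
  qed
  show ?thesis using le[of t] le[of "- t"] by simp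
qed

lemma support_fn_rot: "support_fn C (t + rot_step n) = support_fn C t"
proof -
  let ?c = "rot_step n"
  have "support_fn C (t + ?c) = normal_coord (rot ?c (rot (- ?c) (C (t + ?c)))) (t + ?c)"
    using rot_rot[of ?c "- ?c"] rot_zero by (simp add: support_fn_eq_normal_coord)
  also have "\<dots> = normal_coord (rot (- ?c) (C (t + ?c))) t" by (rule normal_coord_rot)
  also have "\<dots> \<le> support_fn C t" by (rule image_normal_coord_le[OF image_rot_neg[OF curve_in_image]])
  finally have "support_fn C (t + ?c) \<le> support_fn C t" .
  moreover have "support_fn C t = normal_coord (rot ?c (C t)) (t + ?c)"
    by (simp add: normal_coord_rot support_fn_eq_normal_coord)
  moreover have "\<dots> \<le> support_fn C (t + ?c)" by (rule image_normal_coord_le[OF image_rot[OF curve_in_image]])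
  ultimately show ?thesis by simp
qed

lemma support_fn_rot_int: "support_fn C (t + real_of_int k * rot_step n) = support_fn C t"
  using periodic_int[of "support_fn C", OF support_fn_rot] .

lemma support_fn_sym: "support_fn C (e * t + real_of_int k * rot_step n) = support_fn C t" if "e = 1 \<or> e = -1"
  using that support_fn_rot_int support_fn_even by auto

lemma support_fn'_odd: "support_fn' C (- t) = - support_fn' C t"
proof -
  have "((\<lambda>t. support_fn C (- t)) has_real_derivative (support_fn' C (- t) * (- 1))) (at t)"
    by (rule DERIV_chain2[OF support_fn_has_derivative DERIV_minus[OF DERIV_ident]])
  moreover have "(\<lambda>t. support_fn C (- t)) = support_fn C" using support_fn_even by (simp add: fun_eq_iff)
  ultimately have "(support_fn C has_real_derivative (- support_fn' C (- t))) (at t)" by simp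
  then show ?thesis using DERIV_unique[OF support_fn_has_derivative] by fastforce
qed

lemma support_fn'_0: "support_fn' C 0 = 0" using support_fn'_odd[of 0] by simp

lemma support_fn'_reflect: "support_fn' C (rot_step n - t) = - support_fn' C t"
proof -
  have "((\<lambda>t. support_fn C (rot_step n - t)) has_real_derivative (support_fn' C (rot_step n - t) * (0 - 1))) (at t)"
    by (rule DERIV_chain2[OF support_fn_has_derivative DERIV_diff[OF DERIV_const DERIV_ident]])
  moreover have "(\<lambda>t. support_fn C (rot_step n - t)) = support_fn C"
    using support_fn_sym[of "-1" _ 1] by (simp add: fun_eq_iff)
  ultimately have "(support_fn C has_real_derivative (- support_fn' C (rot_step n - t))) (at t)" by simp
  then show ?thesis using DERIV_unique[OF support_fn_has_derivative] by fastforce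
qed

lemma support_fn'_wall: "support_fn' C (pi / real n) = 0"
proof -
  have "rot_step n - pi / real n = pi / real n" unfolding rot_step_def by simp
  then show ?thesis using support_fn'_reflect[of "pi / real n"] by simp
qed

lemma sum_rot_step_sin_cos:
  "(\<Sum>k<n. sin (x + real k * rot_step n)) = 0 \<and> (\<Sum>k<n. cos (x + real k * rot_step n)) = 0"
proof -
  define d where "d = rot_step n / 2"
  have d: "0 < d" "d \<le> pi / 2" unfolding d_def using rot_step_half wall_le_pi_half wall_pos by auto
  have sd: "sin d > 0" using d by (intro sin_gt_zero) auto
  have nd: "x + real n * rot_step n - d = (x - d) + 2 * pi * real_of_int 1" using two_pi_eq_rot_step[OF n_pos] by simp
  have per: "sin (x + real n * rot_step n - d) = sin (x - d) \<and> cos (x + real n * rot_step n - d) = cos (x - d)"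
    unfolding nd by (rule sin_cos_eq_iff[THEN iffD2]) blast
  define g where "g k = sin (x + real k * rot_step n - d)" for k :: nat
  define G where "G k = cos (x + real k * rot_step n - d)" for k :: nat
  have gk: "2 * sin d * cos (x + real k * rot_step n) = g (Suc k) - g k" for k
  proof -
    have e: "x + real (Suc k) * rot_step n - d = (x + real k * rot_step n) + d" unfolding d_def by (simp add: algebra_simps)
    have "g (Suc k) = sin ((x + real k * rot_step n) + d)" by (simp only: g_def e)
    moreover have "g k = sin ((x + real k * rot_step n) - d)" unfolding g_def by simp
    ultimately show ?thesis by (simp add: sin_add sin_diff)
  qed
  have Gk: "2 * sin d * sin (x + real k * rot_step n) = G k - G (Suc k)" for k
  proof -
    have e: "x + real (Suc k) * rot_step n - d = (x + real k * rot_step n) + d" unfolding d_def by (simp add: algebra_simps)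
    have "G (Suc k) = cos ((x + real k * rot_step n) + d)" by (simp only: G_def e)
    moreover have "G k = cos ((x + real k * rot_step n) - d)" unfolding G_def by simp
    ultimately show ?thesis by (simp add: cos_add cos_diff)
  qed
  have "2 * sin d * (\<Sum>k<n. cos (x + real k * rot_step n)) = (\<Sum>k<n. g (Suc k) - g k)"
    by (simp add: sum_distrib_left gk)
  also have "\<dots> = g n - g 0" by (rule sum_lessThan_telescope)
  also have "\<dots> = 0" unfolding g_def using per by simp
  finally have c: "(\<Sum>k<n. cos (x + real k * rot_step n)) = 0" using sd by simp
  have "2 * sin d * (\<Sum>k<n. sin (x + real k * rot_step n)) = (\<Sum>k<n. G k - G (Suc k))"
    by (simp add: sum_distrib_left Gk)
  also have "\<dots> = G 0 - G n" by (rule sum_lessThan_telescope')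
  also have "\<dots> = 0" unfolding G_def using per by simp
  finally have s: "(\<Sum>k<n. sin (x + real k * rot_step n)) = 0" using sd by simp
  show ?thesis using s c by simp
qed

lemma support_fn_nonneg: "support_fn C t \<ge> 0"
proof -
  define q where "q = C t"
  have q: "q \<in> S" unfolding q_def by (rule curve_in_image)
  have "(\<Sum>k<n. normal_coord q (t + real k * rot_step n)) = fst q * (\<Sum>k<n. sin (t + real k * rot_step n)) - snd q * (\<Sum>k<n. cos (t + real k * rot_step n))"
    unfolding normal_coord_def by (simp add: sum_distrib_left sum_subtractf)
  also have "\<dots> = 0" using sum_rot_step_sin_cos by simp
  finally have s0: "(\<Sum>k<n. normal_coord q (t + real k * rot_step n)) = 0" .
  have "normal_coord q (t + real k * rot_step n) \<le> support_fn C t" for k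
  proof -
    have "normal_coord q (t + real k * rot_step n) = normal_coord (rot (- (real k * rot_step n)) q) t"
      using normal_coord_rot[of "- (real k * rot_step n)" q "t + real k * rot_step n"] by simp
    also have "\<dots> \<le> support_fn C t" by (rule image_normal_coord_le[OF image_rot_iter[OF q]])
    finally show ?thesis .
  qed
  then have "(\<Sum>k<n. normal_coord q (t + real k * rot_step n)) \<le> (\<Sum>k<n. support_fn C t)" by (intro sum_mono)
  then have "0 \<le> real n * support_fn C t" using s0 by simp
  then show ?thesis using n2 by (simp add: zero_le_mult_iff)
qed

lemma curve_0_eq: "C 0 = support_fn C 0 *\<^sub>R outer_normal 0"
proof -
  have "fst (C 0) = 0" using support_fn'_0 unfolding support_fn'_def by simp
  moreover have "support_fn C 0 = - snd (C 0)" unfolding support_fn_def by simp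
  ultimately show ?thesis unfolding outer_normal_def by (simp add: prod_eq_iff)
qed

lemma fst_curve_0: "fst (C 0) = 0" using support_fn'_0 unfolding support_fn'_def by simp

lemma fst_curve_strict_mono:
  assumes "0 \<le> s" "s < t" "t \<le> pi / real n"
  shows "fst (C s) < fst (C t)"
proof (rule DERIV_pos_imp_increasing_open[OF assms(2)])
  fix x assume x: "s < x" "x < t"
  have "x < pi / 2" using x assms wall_le_pi_half by linarith
  then have "cos x > 0" using x assms by (intro cos_gt_zero_pi) auto
  then show "\<exists>y. ((\<lambda>t. fst (C t)) has_real_derivative y) (at x) \<and> y > 0"
    using fst_curve_has_derivative curv_radius_pos by (intro exI[of _ "curv_radius C x * cos x"]) auto
next
  show "continuous_on {s..t} (\<lambda>t. fst (C t))"
    by (intro continuous_at_imp_continuous_on ballI) (use fst_curve_has_derivative DERIV_isCont in blast)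
qed

end

section \<open>The support distance\<close>

definition supp_gap :: "(real \<Rightarrow> pt) \<Rightarrow> pt \<Rightarrow> real \<Rightarrow> real" where
  "supp_gap C p t = support_fn C t - (fst p * sin t - snd p * cos t)"

definition supp_gap' :: "(real \<Rightarrow> pt) \<Rightarrow> pt \<Rightarrow> real \<Rightarrow> real" where
  "supp_gap' C p t = support_fn' C t - (fst p * cos t + snd p * sin t)"

definition supp_dist :: "(real \<Rightarrow> pt) \<Rightarrow> pt \<Rightarrow> real" where
  "supp_dist C p = Inf (supp_gap C p ` {0..2*pi})"

definition unique_foot :: "(real \<Rightarrow> pt) \<Rightarrow> pt \<Rightarrow> bool" where
  "unique_foot C p \<longleftrightarrow> (\<forall>t1 t2. supp_gap C p t1 = supp_dist C p \<longrightarrow> supp_gap C p t2 = supp_dist C p \<longrightarrow>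
      sin t1 = sin t2 \<and> cos t1 = cos t2)"

context symmetric_curve
begin

lemma supp_gap_eq: "supp_gap C p t = support_fn C t - normal_coord p t"
  unfolding supp_gap_def normal_coord_def by simp

lemma supp_gap_periodic: "supp_gap C p (t + 2 * pi * real_of_int k) = supp_gap C p t"
proof -
  have sc: "sin (t + 2 * pi * real_of_int k) = sin t \<and> cos (t + 2 * pi * real_of_int k) = cos t"
    by (rule sin_cos_eq_iff[THEN iffD2]) blast
  have "support_fn C (t + 2 * pi * real_of_int k) = support_fn C t" unfolding support_fn_def using curve_periodic_int sc by simp
  then show ?thesis unfolding supp_gap_def using sc by simp
qed

lemma supp_gap_same_angle: "sin t = sin s \<Longrightarrow> cos t = cos s \<Longrightarrow> supp_gap C p t = supp_gap C p s"
proof -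
  assume "sin t = sin s" "cos t = cos s"
  then obtain k :: int where "t = s + 2 * pi * k" using sin_cos_eq_iff by metis
  then show ?thesis using supp_gap_periodic by simp
qed

lemma isCont_supp_gap: "isCont (supp_gap C p) t"
  unfolding supp_gap_def by (intro continuous_intros isCont_support_fn)

lemma supp_gap_has_derivative: "(supp_gap C p has_real_derivative supp_gap' C p t) (at t)"
proof -
  have "((\<lambda>t. support_fn C t - (fst p * sin t - snd p * cos t)) has_real_derivative
      support_fn' C t - (fst p * cos t - snd p * (- sin t))) (at t)"
    by (intro DERIV_diff support_fn_has_derivative DERIV_cmult DERIV_sin DERIV_cos)
  then show ?thesis unfolding supp_gap_def[abs_def] supp_gap'_def by simp
qed

lemma supp_dist_le: "supp_dist C p \<le> supp_gap C p t"
proof -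
  obtain k :: int where k: "0 \<le> t - 2 * pi * k" "t - 2 * pi * k < 2 * pi" by (rule obtain_angle_in_period)
  have "supp_gap C p t = supp_gap C p (t - 2 * pi * k)" using supp_gap_periodic[of p "t - 2 * pi * k" k] by simp
  moreover have "bdd_below (supp_gap C p ` {0..2*pi})"
    using compact_imp_bounded[OF compact_continuous_image[OF continuous_at_imp_continuous_on[OF ballI[OF isCont_supp_gap]] compact_Icc]]
    by (rule bounded_imp_bdd_below)
  ultimately show ?thesis unfolding supp_dist_def using k by (metis atLeastAtMost_iff cINF_lower less_eq_real_def)
qed

lemma supp_dist_attained: "\<exists>t\<in>{0..2*pi}. supp_dist C p = supp_gap C p t"
proof -
  have "\<exists>t\<in>{0..2*pi}. \<forall>s\<in>{0..2*pi}. supp_gap C p t \<le> supp_gap C p s"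
    by (rule continuous_attains_inf[OF compact_Icc]) (auto intro!: continuous_at_imp_continuous_on isCont_supp_gap simp: pi_gt_zero less_imp_le)
  then obtain t where t: "t \<in> {0..2*pi}" "\<forall>s\<in>{0..2*pi}. supp_gap C p t \<le> supp_gap C p s" by blast
  have "supp_dist C p = supp_gap C p t"
    using supp_dist_le[of p t] t unfolding supp_dist_def
    by (intro antisym) (auto intro!: cINF_greatest)
  then show ?thesis using t by blast
qed

lemma supp_gap_argmin_iff: "supp_gap C p t = supp_dist C p \<longleftrightarrow> (\<forall>\<phi>. supp_gap C p t \<le> supp_gap C p \<phi>)"
proof
  assume "supp_gap C p t = supp_dist C p" then show "\<forall>\<phi>. supp_gap C p t \<le> supp_gap C p \<phi>" using supp_dist_le by simp
next
  assume a: "\<forall>\<phi>. supp_gap C p t \<le> supp_gap C p \<phi>"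
  obtain t0 where "supp_dist C p = supp_gap C p t0" using supp_dist_attained by blast
  then show "supp_gap C p t = supp_dist C p" using a supp_dist_le[of p t] by (metis antisym)
qed

lemma supp_gap'_argmin: "supp_gap C p t = supp_dist C p \<Longrightarrow> supp_gap' C p t = 0"
  by (rule DERIV_local_min[OF supp_gap_has_derivative, of 1]) (use supp_dist_le in auto)

lemma argmin_monotone:
  assumes "supp_gap C p tp = supp_dist C p" "supp_gap C q tq = supp_dist C q"
  shows "normal_coord (p - q) tp \<ge> normal_coord (p - q) tq"
proof -
  have "supp_dist C p \<le> supp_gap C p tq" "supp_dist C q \<le> supp_gap C q tp" by (rule supp_dist_le)+
  then show ?thesis using assms unfolding supp_gap_eq normal_coord_diff by simp
qed

lemma supp_gap_lipschitz: "\<bar>supp_gap C p t - supp_gap C q t\<bar> \<le> dist p q"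
proof -
  have "supp_gap C p t - supp_gap C q t = - normal_coord (p - q) t" unfolding supp_gap_eq normal_coord_diff by simp
  then show ?thesis using abs_normal_coord_le[of "p - q" t] by (simp add: dist_norm)
qed

lemma supp_dist_lipschitz: "\<bar>supp_dist C p - supp_dist C q\<bar> \<le> dist p q"
proof -
  obtain tp where tp: "supp_dist C p = supp_gap C p tp" using supp_dist_attained by blast
  obtain tq where tq: "supp_dist C q = supp_gap C q tq" using supp_dist_attained by blast
  have "supp_dist C q \<le> supp_gap C q tp" by (rule supp_dist_le)
  moreover have "supp_dist C p \<le> supp_gap C p tq" by (rule supp_dist_le)
  ultimately show ?thesis using supp_gap_lipschitz[of p tp q] supp_gap_lipschitz[of p tq q] tp tq by (simp add: abs_le_iff)
qed

lemma continuous_on_supp_dist: "continuous_on A (supp_dist C)"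
proof (rule continuous_at_imp_continuous_on, rule ballI)
  fix x
  show "isCont (supp_dist C) x"
    unfolding continuous_at_eps_delta
  proof (intro allI impI)
    fix e :: real assume "e > 0"
    have "dist (supp_dist C y) (supp_dist C x) < e" if "dist y x < e" for y
      using supp_dist_lipschitz[of y x] that by (simp add: dist_real_def)
    then show "\<exists>d>0. \<forall>y. dist y x < d \<longrightarrow> dist (supp_dist C y) (supp_dist C x) < e"
      using \<open>e > 0\<close> by blast
  qed
qed

lemma supp_dist_concave:
  assumes "0 \<le> l" "l \<le> 1"
  shows "(1 - l) * supp_dist C p + l * supp_dist C q \<le> supp_dist C ((1 - l) *\<^sub>R p + l *\<^sub>R q)"
proof -
  obtain t where t: "supp_dist C ((1 - l) *\<^sub>R p + l *\<^sub>R q) = supp_gap C ((1 - l) *\<^sub>R p + l *\<^sub>R q) t"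
    using supp_dist_attained by blast
  have "supp_gap C ((1 - l) *\<^sub>R p + l *\<^sub>R q) t = (1 - l) * supp_gap C p t + l * supp_gap C q t"
    unfolding supp_gap_eq normal_coord_add normal_coord_scaleR by (simp add: algebra_simps)
  moreover have "(1 - l) * supp_dist C p \<le> (1 - l) * supp_gap C p t" using assms supp_dist_le by (intro mult_left_mono) auto
  moreover have "l * supp_dist C q \<le> l * supp_gap C q t" using assms supp_dist_le by (intro mult_left_mono) auto
  ultimately show ?thesis using t by simp
qed

lemma curve_eq_of_tangent_coords:
  assumes "normal_coord q t = support_fn C t" "fst q * cos t + snd q * sin t = support_fn' C t"
  shows "q = C t"
proof -
  have "(fst (C t) - fst q) * sin t - (snd (C t) - snd q) * cos t = 0"
    "(fst (C t) - fst q) * cos t + (snd (C t) - snd q) * sin t = 0"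
    using assms unfolding normal_coord_def support_fn_def support_fn'_def by (simp_all add: algebra_simps)
  from rotated_linear_system_zero[OF this] show ?thesis by (simp add: prod_eq_iff)
qed

lemma supp_dist_zero_imp_image: "supp_dist C q = 0 \<Longrightarrow> q \<in> S"
proof -
  assume z: "supp_dist C q = 0"
  obtain t where t: "supp_dist C q = supp_gap C q t" using supp_dist_attained by blast
  have "supp_gap' C q t = 0" using supp_gap'_argmin t by simp
  then have "q = C t" using t z by (intro curve_eq_of_tangent_coords) (auto simp: supp_gap_eq supp_gap'_def)
  then show ?thesis using curve_in_image by simp
qed

lemma supp_dist_image: "q \<in> S \<Longrightarrow> supp_dist C q = 0"
proof -
  assume q: "q \<in> S"
  then obtain t where "q = C t" unfolding curve_image_def by auto
  then have "supp_gap C q t = 0" by (simp add: supp_gap_eq support_fn_eq_normal_coord)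
  then have "supp_dist C q \<le> 0" using supp_dist_le[of q t] by simp
  moreover have "supp_dist C q \<ge> 0"
  proof -
    obtain s where "supp_dist C q = supp_gap C q s" using supp_dist_attained by blast
    then show ?thesis using image_normal_coord_le[OF q, of s] by (simp add: supp_gap_eq)
  qed
  ultimately show ?thesis by simp
qed

lemma unique_foot_image:
  assumes "supp_dist C q = 0"
  shows "unique_foot C q"
  unfolding unique_foot_def
proof (intro allI impI)
  fix t1 t2 assume t1: "supp_gap C q t1 = supp_dist C q" and t2: "supp_gap C q t2 = supp_dist C q"
  have "q = C t" if "supp_gap C q t = supp_dist C q" for t
  proof -
    have "supp_gap' C q t = 0" using supp_gap'_argmin that by simp
    then show ?thesis using that assms by (intro curve_eq_of_tangent_coords) (auto simp: supp_gap_eq supp_gap'_def)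
  qed
  then have "C t1 = C t2" using t1 t2 by metis
  then obtain k :: int where "t1 = t2 + 2 * pi * k" using curve_eq_imp_period by blast
  then show "sin t1 = sin t2 \<and> cos t1 = cos t2" by (metis sin_cos_eq_iff)
qed

lemma bounded_supp_dist_pos: "bounded {p. supp_dist C p > 0}"
proof -
  obtain M where M: "\<forall>t. norm (C t) \<le> M" using curve_bounded by blast
  have "norm p \<le> M" if "supp_dist C p > 0" for p
  proof (cases "p = 0")
    case True then show ?thesis using M norm_ge_zero order_trans by (metis norm_zero)
  next
    case False
    then obtain t where t: "normal_coord p t = norm p" by (rule obtain_normal_direction)
    have "0 < supp_gap C p t" using that supp_dist_le[of p t] by simp
    then have "norm p < support_fn C t" using t by (simp add: supp_gap_eq)
    also have "support_fn C t \<le> norm (C t)" using abs_normal_coord_le[of "C t" t] by (simp add: support_fn_eq_normal_coord)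
    finally have "norm p < norm (C t)" .
    then show ?thesis using M[rule_format, of t] by linarith
  qed
  then show ?thesis unfolding bounded_iff by blast
qed

lemma supp_dist_pos_imp_domain:
  assumes "supp_dist C p > 0"
  shows "p \<in> domain C"
proof -
  have pS: "p \<notin> S" using assms supp_dist_image by fastforce
  define K where "K = connected_component_set (- S) p"
  have oU: "open {p. supp_dist C p > 0}"
    by (rule open_Collect_less[OF continuous_on_const continuous_on_supp_dist])
  have oV: "open {p. supp_dist C p < 0}"
    by (rule open_Collect_less[OF continuous_on_supp_dist continuous_on_const])
  have KS: "K \<subseteq> - S" unfolding K_def by (rule connected_component_subset)
  have "K \<subseteq> {p. supp_dist C p > 0} \<union> {p. supp_dist C p < 0}"
  proof
    fix x assume "x \<in> K"
    then have "x \<notin> S" using KS by blast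
    then have "supp_dist C x \<noteq> 0" using supp_dist_zero_imp_image by blast
    then show "x \<in> {p. supp_dist C p > 0} \<union> {p. supp_dist C p < 0}" by auto
  qed
  moreover have "p \<in> K" unfolding K_def using pS by simp
  moreover have "{p. 0 < supp_dist C p} \<inter> K = {} \<or> {p. supp_dist C p < 0} \<inter> K = {}"
    by (rule connectedD[OF _ oU oV]) (use \<open>K \<subseteq> {p. supp_dist C p > 0} \<union> {p. supp_dist C p < 0}\<close> in \<open>auto simp: K_def\<close>)
  ultimately have "{p. supp_dist C p < 0} \<inter> K = {}" using assms by blast
  then have "K \<subseteq> {p. supp_dist C p > 0}"
    using \<open>K \<subseteq> {p. supp_dist C p > 0} \<union> {p. supp_dist C p < 0}\<close> by blast
  then have "bounded K" using bounded_supp_dist_pos bounded_subset by blast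
  then show "p \<in> domain C" unfolding domain_def inside_def K_def using pS by blast
qed

lemma domain_imp_supp_dist_pos:
  assumes "p \<in> domain C"
  shows "supp_dist C p > 0"
proof (rule ccontr)
  have pS: "p \<notin> S" and bK: "bounded (connected_component_set (- S) p)"
    using assms unfolding domain_def inside_def by auto
  assume "\<not> supp_dist C p > 0"
  moreover have "supp_dist C p \<noteq> 0" using pS supp_dist_zero_imp_image by blast
  ultimately have neg: "supp_dist C p < 0" by simp
  obtain t where t: "supp_dist C p = supp_gap C p t" using supp_dist_attained by blast
  have gt: "normal_coord p t > support_fn C t" using neg t by (simp add: supp_gap_eq)
  define v where "v = outer_normal t"
  have ipv: "normal_coord (p + s *\<^sub>R v) t = normal_coord p t + s" for s
  proof -
    have "normal_coord v t = sin t * sin t + cos t * cos t" unfolding normal_coord_def v_def outer_normal_def by simp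
    also have "\<dots> = 1" by (metis sin_cos_squared_add power2_eq_square)
    finally show ?thesis by (simp add: normal_coord_add normal_coord_scaleR)
  qed
  define R where "R = (\<lambda>s. p + s *\<^sub>R v) ` {0..}"
  have "connected R" unfolding R_def
    by (intro connected_continuous_image connected_Ici continuous_intros)
  moreover have "p \<in> R" unfolding R_def by (auto intro!: image_eqI[of _ _ 0])
  moreover have "R \<subseteq> - S"
  proof
    fix x assume "x \<in> R"
    then obtain s where s: "s \<ge> 0" "x = p + s *\<^sub>R v" unfolding R_def by auto
    then have "normal_coord x t > support_fn C t" using gt ipv by simp
    then show "x \<in> - S" using image_normal_coord_le[of x t] by (auto simp: not_le)
  qed
  ultimately have "R \<subseteq> connected_component_set (- S) p"
    using connected_component_maximal by metis
  then have "bounded R" using bK bounded_subset by blast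
  then obtain B where B: "\<forall>x\<in>R. norm x \<le> B" unfolding bounded_iff by blast
  define s where "s = \<bar>B\<bar> + \<bar>normal_coord p t\<bar> + 1"
  have "p + s *\<^sub>R v \<in> R" unfolding R_def s_def by auto
  then have "norm (p + s *\<^sub>R v) \<le> B" using B by blast
  moreover have "normal_coord (p + s *\<^sub>R v) t \<le> norm (p + s *\<^sub>R v)" using abs_normal_coord_le abs_le_iff by blast
  ultimately show False using ipv[of s] unfolding s_def by linarith
qed

lemma domain_eq_supp_dist_pos: "domain C = {p. supp_dist C p > 0}"
  using supp_dist_pos_imp_domain domain_imp_supp_dist_pos by blast

lemma open_domain: "open (domain C)"
  unfolding domain_eq_supp_dist_pos by (rule open_Collect_less[OF continuous_on_const continuous_on_supp_dist])

lemma infdist_eq_supp_dist: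
  assumes "supp_dist C p \<ge> 0"
  shows "infdist p S = supp_dist C p"
proof (rule antisym)
  obtain t where t: "supp_dist C p = supp_gap C p t" using supp_dist_attained by blast
  have st: "supp_gap' C p t = 0" using supp_gap'_argmin t by simp
  define v where "v = C t - p"
  have "normal_coord v t = supp_dist C p" unfolding v_def using t by (simp add: normal_coord_diff supp_gap_eq support_fn_eq_normal_coord)
  moreover have "fst v * cos t + snd v * sin t = 0"
    using st unfolding v_def supp_gap'_def support_fn'_def by (simp add: algebra_simps)
  ultimately have "(norm v)^2 = (supp_dist C p)^2" using norm_pt_sq_normal_coord[of v t] by simp
  then have "norm v = supp_dist C p" using assms by (metis norm_ge_zero power2_eq_iff_nonneg)
  then have "dist p (C t) = supp_dist C p" unfolding v_def by (simp add: dist_norm norm_minus_commute)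
  then show "infdist p S \<le> supp_dist C p" using infdist_le[OF curve_in_image, of p t] by simp
next
  have ne: "S \<noteq> {}" using curve_in_image by blast
  show "supp_dist C p \<le> infdist p S"
    unfolding infdist_notempty[OF ne]
  proof (rule cINF_greatest[OF ne])
    fix a assume "a \<in> S"
    then obtain t where a: "a = C t" unfolding curve_image_def by auto
    have "supp_dist C p \<le> supp_gap C p t" by (rule supp_dist_le)
    also have "\<dots> = normal_coord (a - p) t" using a by (simp add: supp_gap_eq normal_coord_diff support_fn_eq_normal_coord)
    also have "\<dots> \<le> norm (a - p)" using abs_normal_coord_le abs_le_iff by blast
    finally show "supp_dist C p \<le> dist p a" by (simp add: dist_norm norm_minus_commute)
  qed
qed

lemma supp_dist_origin_pos: "supp_dist C 0 > 0"
proof -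
  have f0: "supp_gap C 0 t = support_fn C t" for t unfolding supp_gap_def by simp
  obtain t0 where t0: "supp_dist C 0 = supp_gap C 0 t0" using supp_dist_attained by blast
  have ge: "supp_dist C 0 \<ge> 0" using t0 f0 support_fn_nonneg by simp
  show ?thesis
  proof (rule ccontr)
    assume "\<not> ?thesis"
    then have z: "supp_dist C 0 = 0" using ge by simp
    then have "0 \<in> S" by (rule supp_dist_zero_imp_image)
    then obtain s where s: "C s = 0" unfolding curve_image_def by auto
    have hs: "support_fn C s = 0" using s unfolding support_fn_def by simp
    have "support_fn C (s + rot_step n) = 0" using support_fn_rot[of s] hs unfolding rot_step_def by simp
    then have am: "supp_gap C 0 (s + rot_step n) = supp_dist C 0" using z f0 by simp
    then have "supp_gap' C 0 (s + rot_step n) = 0" by (rule supp_gap'_argmin)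
    then have "support_fn' C (s + rot_step n) = 0" unfolding supp_gap'_def by simp
    then have "0 = C (s + rot_step n)"
      using \<open>support_fn C (s + rot_step n) = 0\<close> by (intro curve_eq_of_tangent_coords) (auto simp: normal_coord_def)
    then have "C (s + rot_step n) = C s" using s by simp
    then obtain k :: int where "s + rot_step n = s + 2 * pi * k" using curve_eq_imp_period by blast
    then show False using rot_step_not_period[of k] by simp
  qed
qed

lemma argmin_angle_stable:
  assumes u: "unique_foot C p" and t0: "supp_gap C p t0 = supp_dist C p" and e: "e > 0"
  shows "\<exists>d>0. \<forall>q t. dist q p < d \<longrightarrow> supp_gap C q t = supp_dist C q \<longrightarrow> angle_dist t t0 < e"
proof -
  define K where "K = {0..2*pi} \<inter> {t. e \<le> angle_dist t t0}"
  have dcont: "continuous_on UNIV (\<lambda>t. angle_dist t t0)" unfolding angle_dist_def by (intro continuous_intros)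
  have cK: "compact K" unfolding K_def
    by (intro compact_Int_closed compact_Icc closed_Collect_le continuous_on_const dcont)
  show ?thesis
  proof (cases "K = {}")
    case True
    have "angle_dist t t0 < e" for t
    proof -
      obtain t' where t': "t' \<in> {0..2*pi}" "sin t' = sin t" "cos t' = cos t" by (rule obtain_same_angle_in_period)
      then have "t' \<notin> K" using True by blast
      then have "angle_dist t' t0 < e" using t' unfolding K_def by auto
      then show ?thesis using t' by (simp add: angle_dist_def)
    qed
    then show ?thesis by (intro exI[of _ 1]) auto
  next
    case False
    obtain tK where tK: "tK \<in> K" "\<forall>s\<in>K. supp_gap C p tK \<le> supp_gap C p s"
      using continuous_attains_inf[OF cK False continuous_at_imp_continuous_on[OF ballI[OF isCont_supp_gap]]] by blast
    have gt: "supp_gap C p tK > supp_dist C p"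
    proof (rule ccontr)
      assume "\<not> ?thesis"
      then have "supp_gap C p tK = supp_dist C p" using supp_dist_le[of p tK] by simp
      then have "sin tK = sin t0 \<and> cos tK = cos t0" using u t0 unfolding unique_foot_def by blast
      then have "angle_dist tK t0 = 0" by (simp add: angle_dist_def)
      then show False using tK(1) e unfolding K_def by auto
    qed
    define \<eta> where "\<eta> = supp_gap C p tK - supp_dist C p"
    have eta: "\<eta> > 0" using gt unfolding \<eta>_def by simp
    show ?thesis
    proof (intro exI[of _ "\<eta> / 2"] conjI allI impI)
      show "\<eta> / 2 > 0" using eta by simp
      fix q t assume q: "dist q p < \<eta> / 2" and t: "supp_gap C q t = supp_dist C q"
      obtain t' where t': "t' \<in> {0..2*pi}" "sin t' = sin t" "cos t' = cos t" by (rule obtain_same_angle_in_period)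
      have ft': "supp_gap C q t' = supp_dist C q" using t supp_gap_same_angle[OF t'(2,3)] by simp
      have "t' \<notin> K"
      proof
        assume tK': "t' \<in> K"
        have "supp_gap C p t' \<ge> supp_gap C p tK" using tK tK' by blast
        moreover have "supp_gap C q t' \<ge> supp_gap C p t' - dist q p" using supp_gap_lipschitz[of q t' p] by (simp add: dist_commute)
        moreover have "supp_dist C q \<le> supp_dist C p + dist q p" using supp_dist_lipschitz[of q p] by simp
        ultimately show False using ft' q unfolding \<eta>_def by (simp add: field_simps)
      qed
      then have "angle_dist t' t0 < e" using t' unfolding K_def by auto
      then show "angle_dist t t0 < e" using t' by (simp add: angle_dist_def)
    qed
  qed
qed

lemma supp_dist_has_derivative:
  assumes u: "unique_foot C p" and t0: "supp_gap C p t0 = supp_dist C p"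
  shows "(supp_dist C has_derivative (\<lambda>v. - normal_coord v t0)) (at p)"
  unfolding has_derivative_at_alt
proof (intro conjI bounded_linear_normal_coord allI impI)
  fix e :: real assume e: "e > 0"
  obtain d where d: "d > 0" "\<forall>q t. dist q p < d \<longrightarrow> supp_gap C q t = supp_dist C q \<longrightarrow> angle_dist t t0 < e"
    using argmin_angle_stable[OF u t0 e] by blast
  show "\<exists>d>0. \<forall>y. norm (y - p) < d \<longrightarrow> norm (supp_dist C y - supp_dist C p - - normal_coord (y - p) t0) \<le> e * norm (y - p)"
  proof (intro exI[of _ d] conjI allI impI d(1))
    fix q assume q: "norm (q - p) < d"
    obtain tq where tq: "supp_dist C q = supp_gap C q tq" using supp_dist_attained by blast
    have dl: "angle_dist tq t0 < e" using d(2)[rule_format, of q tq] q tq by (simp add: dist_norm)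
    have up: "supp_dist C q \<le> supp_dist C p - normal_coord (q - p) t0"
      using supp_dist_le[of q t0] t0 by (simp add: supp_gap_eq normal_coord_diff)
    have lo: "supp_dist C q \<ge> supp_dist C p - normal_coord (q - p) tq"
      using supp_dist_le[of p tq] tq by (simp add: supp_gap_eq normal_coord_diff)
    have "\<bar>normal_coord (q - p) tq - normal_coord (q - p) t0\<bar> \<le> norm (q - p) * angle_dist tq t0" by (rule normal_coord_angle_lipschitz)
    also have "\<dots> \<le> norm (q - p) * e" using dl by (intro mult_left_mono) auto
    finally have "\<bar>normal_coord (q - p) tq - normal_coord (q - p) t0\<bar> \<le> e * norm (q - p)" by (simp add: mult.commute)
    then show "norm (supp_dist C q - supp_dist C p - - normal_coord (q - p) t0) \<le> e * norm (q - p)"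
      using up lo by (simp add: abs_le_iff)
  qed
qed

lemma supp_dist_not_differentiable:
  assumes t1: "supp_gap C p t1 = supp_dist C p" and t2: "supp_gap C p t2 = supp_dist C p"
    and ne: "\<not> (sin t1 = sin t2 \<and> cos t1 = cos t2)"
  shows "\<not> (supp_dist C differentiable (at p))"
proof
  assume "supp_dist C differentiable (at p)"
  then obtain D where D: "(supp_dist C has_derivative D) (at p)" unfolding differentiable_def by blast
  have le: "D v \<le> - normal_coord v t" if t: "supp_gap C p t = supp_dist C p" for v t
  proof (rule has_derivative_le_of_upper_bound[OF D])
    fix s :: real
    show "supp_dist C (p + s *\<^sub>R v) \<le> supp_dist C p + s * - normal_coord v t"
      using supp_dist_le[of "p + s *\<^sub>R v" t] t by (simp add: supp_gap_eq normal_coord_add normal_coord_scaleR)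
  qed
  have eq: "D v = - normal_coord v t" if t: "supp_gap C p t = supp_dist C p" for v t
  proof -
    have "D (- v) = - D v"
      using linear.scaleR[OF bounded_linear.linear[OF has_derivative_bounded_linear[OF D]], of "-1" v] by simp
    moreover have "normal_coord (- v) t = - normal_coord v t" unfolding normal_coord_def by simp
    ultimately show ?thesis using le[OF t, of v] le[OF t, of "- v"] by simp
  qed
  have "normal_coord (1, 0) t1 = normal_coord (1, 0) t2" "normal_coord (0, 1) t1 = normal_coord (0, 1) t2"
    using eq[OF t1, of "(1, 0)"] eq[OF t2, of "(1, 0)"] eq[OF t1, of "(0, 1)"] eq[OF t2, of "(0, 1)"] by simp_all
  then show False using ne unfolding normal_coord_def by simp
qed

lemma infdist_differentiable_iff_unique_foot:
  assumes p: "p \<in> domain C"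
  shows "((\<lambda>q. infdist q S) differentiable (at p)) \<longleftrightarrow> unique_foot C p"
proof -
  have eqf: "\<And>x. x \<in> domain C \<Longrightarrow> supp_dist C x = infdist x S"
    using infdist_eq_supp_dist domain_eq_supp_dist_pos by (simp add: less_imp_le)
  have "((\<lambda>q. infdist q S) differentiable (at p)) \<longleftrightarrow> (supp_dist C differentiable (at p))"
  proof
    assume "(\<lambda>q. infdist q S) differentiable (at p)"
    then obtain D where "((\<lambda>q. infdist q S) has_derivative D) (at p)" unfolding differentiable_def by blast
    then have "(supp_dist C has_derivative D) (at p)"
      by (rule has_derivative_transform_within_open[OF _ open_domain p]) (simp add: eqf)
    then show "supp_dist C differentiable (at p)" unfolding differentiable_def by blast
  next
    assume "supp_dist C differentiable (at p)"
    then obtain D where "(supp_dist C has_derivative D) (at p)" unfolding differentiable_def by blast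
    then have "((\<lambda>q. infdist q S) has_derivative D) (at p)"
      by (rule has_derivative_transform_within_open[OF _ open_domain p]) (simp add: eqf)
    then show "(\<lambda>q. infdist q S) differentiable (at p)" unfolding differentiable_def by blast
  qed
  also have "\<dots> \<longleftrightarrow> unique_foot C p"
  proof
    assume d: "supp_dist C differentiable (at p)"
    show "unique_foot C p" unfolding unique_foot_def using supp_dist_not_differentiable d by blast
  next
    assume u: "unique_foot C p"
    obtain t0 where "supp_dist C p = supp_gap C p t0" using supp_dist_attained by blast
    then show "supp_dist C differentiable (at p)"
      using supp_dist_has_derivative[OF u] unfolding differentiable_def by metis
  qed
  finally show ?thesis .
qed

abbreviation "singular_set \<equiv> {p \<in> domain C. \<not> ((\<lambda>q. infdist q (curve_image C)) differentiable (at p))}"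

lemma skeleton_eq: "skeleton C = closure singular_set" unfolding skeleton_def by simp

end

section \<open>Reduction to the chamber \<open>0 \<le> \<theta> \<le> \<pi>/n\<close>\<close>

definition polar_gap :: "(real \<Rightarrow> pt) \<Rightarrow> real \<Rightarrow> real \<Rightarrow> real \<Rightarrow> real" where
  "polar_gap C r a t = support_fn C t - r * cos (t - a)"

definition polar_gap' :: "(real \<Rightarrow> pt) \<Rightarrow> real \<Rightarrow> real \<Rightarrow> real \<Rightarrow> real" where
  "polar_gap' C r a t = support_fn' C t + r * sin (t - a)"

context symmetric_curve
begin

lemma supp_gap_polar: "supp_gap C (r *\<^sub>R outer_normal a) t = polar_gap C r a t"
  unfolding supp_gap_def polar_gap_def outer_normal_def by (simp add: cos_diff algebra_simps)

lemma polar_gap_has_derivative: "(polar_gap C r a has_real_derivative polar_gap' C r a t) (at t)"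
proof -
  have "((\<lambda>t. support_fn C t - r * cos (t - a)) has_real_derivative support_fn' C t - r * (- sin (t - a) * (1 - 0))) (at t)"
    by (intro DERIV_diff support_fn_has_derivative DERIV_cmult DERIV_chain2[OF DERIV_cos] DERIV_diff DERIV_ident DERIV_const)
  then show ?thesis unfolding polar_gap_def[abs_def] polar_gap'_def by simp
qed

lemma isCont_polar_gap: "isCont (polar_gap C r a) t" using polar_gap_has_derivative DERIV_isCont by blast

lemma polar_gap_periodic: "polar_gap C r a (t + 2 * pi * real_of_int k) = polar_gap C r a t"
proof -
  have "polar_gap C r a (t + 2 * pi * real_of_int k) = supp_gap C (r *\<^sub>R outer_normal a) (t + 2 * pi * real_of_int k)"
    by (simp add: supp_gap_polar)
  also have "\<dots> = supp_gap C (r *\<^sub>R outer_normal a) t" by (rule supp_gap_periodic)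
  finally show ?thesis by (simp add: supp_gap_polar)
qed

lemma polar_gap_sym:
  assumes "e = 1 \<or> e = -1"
  shows "polar_gap C r (e * a + real_of_int k * rot_step n) (e * t + real_of_int k * rot_step n) = polar_gap C r a t"
proof -
  have ca: "cos (a - t) = cos (t - a)" by (metis cos_minus minus_diff_eq)
  have "cos (e * t + real_of_int k * rot_step n - (e * a + real_of_int k * rot_step n)) = cos (t - a)"
    using assms ca by (auto simp: algebra_simps)
  then show ?thesis unfolding polar_gap_def using support_fn_sym[OF assms] by simp
qed

lemma polar_gap'_minimiser: "\<forall>\<phi>. polar_gap C r a t \<le> polar_gap C r a \<phi> \<Longrightarrow> polar_gap' C r a t = 0"
  by (rule DERIV_local_min[OF polar_gap_has_derivative, of 1]) auto

lemma obtain_chamber_angle: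
  obtains e a0 k where "e = 1 \<or> e = -1" "0 \<le> a0" "a0 \<le> pi / real n" "x = e * a0 + real_of_int k * rot_step n"
proof -
  define k where "k = floor (x / rot_step n + 1 / 2)"
  have k1: "real_of_int k \<le> x / rot_step n + 1 / 2" unfolding k_def by linarith
  have k2: "x / rot_step n + 1 / 2 < real_of_int k + 1" unfolding k_def by linarith
  define b where "b = x - real_of_int k * rot_step n"
  have "real_of_int k * rot_step n \<le> x + rot_step n / 2" using k1 rot_step_pos by (simp add: field_simps)
  then have b1: "- (pi / real n) \<le> b" unfolding b_def using rot_step_half by linarith
  have "x + rot_step n / 2 < real_of_int k * rot_step n + rot_step n" using k2 rot_step_pos by (simp add: field_simps)
  then have b2: "b < pi / real n" unfolding b_def using rot_step_half by linarith
  show ?thesis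
  proof (cases "b \<ge> 0")
    case True
    then show ?thesis using that[of 1 b k] b2 unfolding b_def by simp
  next
    case False
    then show ?thesis using that[of "-1" "- b" k] b1 unfolding b_def by simp
  qed
qed

lemma cos_folded_le:
  assumes a: "0 \<le> a" "a \<le> pi / real n" and t: "0 \<le> t'" "t' \<le> pi / real n" and e: "e = 1 \<or> e = -1"
  shows "cos (e * t' + real_of_int m * rot_step n - a) \<le> cos (t' - a)"
proof -
  define u where "u = e * t' + real_of_int m * rot_step n - a"
  obtain j :: int where j: "0 - pi \<le> u - 2 * pi * j" "u - 2 * pi * j \<le> 0 + pi" by (rule obtain_angle_near)
  define w where "w = u - 2 * pi * j"
  have cu: "cos u = cos w"
  proof -
    have "sin u = sin (w + 2 * pi * j) \<and> cos u = cos (w + 2 * pi * j)" unfolding w_def by simp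
    moreover have "sin (w + 2 * pi * j) = sin w \<and> cos (w + 2 * pi * j) = cos w"
      by (rule sin_cos_eq_iff[THEN iffD2]) blast
    ultimately show ?thesis by simp
  qed
  have "w = e * t' - a + real_of_int (m - int n * j) * rot_step n"
    unfolding w_def u_def using two_pi_eq_rot_step[OF n_pos] by (simp add: algebra_simps)
  then have wa: "\<bar>t' - a\<bar> \<le> \<bar>w\<bar>"
    using abs_diff_le_folded[OF rot_step_pos, of a t' e "m - int n * j"] a t e rot_step_half by simp
  have wpi: "\<bar>w\<bar> \<le> pi" using j unfolding w_def by simp
  have "cos \<bar>w\<bar> \<le> cos \<bar>t' - a\<bar>"
    using wa wpi by (intro cos_monotone_0_pi_le) auto
  then show ?thesis using cu unfolding u_def by simp
qed

lemma obtain_chamber_representative: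
  assumes r: "r \<ge> 0" and a: "0 \<le> a" "a \<le> pi / real n"
  obtains t' e k where "0 \<le> t'" "t' \<le> pi / real n" "e = 1 \<or> e = -1" "\<phi> = e * t' + real_of_int k * rot_step n"
    "polar_gap C r a t' \<le> polar_gap C r a \<phi>"
proof -
  obtain e t' k where d: "e = 1 \<or> e = -1" "0 \<le> t'" "t' \<le> pi / real n" "\<phi> = e * t' + real_of_int k * rot_step n"
    by (rule obtain_chamber_angle)
  have "support_fn C \<phi> = support_fn C t'" using d support_fn_sym by simp
  moreover have "cos (\<phi> - a) \<le> cos (t' - a)" using cos_folded_le[OF a d(2,3) d(1)] d(4) by simp
  ultimately have "polar_gap C r a t' \<le> polar_gap C r a \<phi>" unfolding polar_gap_def using r by (simp add: mult_left_mono)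
  then show ?thesis using that d by blast
qed

lemma exists_chamber_minimiser:
  assumes r: "r \<ge> 0" and a: "0 \<le> a" "a \<le> pi / real n"
  shows "\<exists>t\<in>{0..pi / real n}. \<forall>\<phi>. polar_gap C r a t \<le> polar_gap C r a \<phi>"
proof -
  have "\<exists>t\<in>{0..pi / real n}. \<forall>s\<in>{0..pi / real n}. polar_gap C r a t \<le> polar_gap C r a s"
    by (rule continuous_attains_inf[OF compact_Icc])
       (auto intro!: continuous_at_imp_continuous_on isCont_polar_gap simp: less_imp_le[OF wall_pos])
  then obtain t where t: "t \<in> {0..pi / real n}" "\<forall>s\<in>{0..pi / real n}. polar_gap C r a t \<le> polar_gap C r a s" by blast
  have "polar_gap C r a t \<le> polar_gap C r a \<phi>" for \<phi>
  proof -
    obtain t' e k where t': "0 \<le> t'" "t' \<le> pi / real n" "polar_gap C r a t' \<le> polar_gap C r a \<phi>"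
      using obtain_chamber_representative[OF r a] by metis
    have "polar_gap C r a t \<le> polar_gap C r a t'" using t(2) t'(1,2) by simp
    then show ?thesis using t'(3) by linarith
  qed
  then show ?thesis using t by blast
qed

lemma exists_chamber_argmin:
  assumes r: "r \<ge> 0" and a: "0 \<le> a" "a \<le> pi / real n"
  shows "\<exists>t\<in>{0..pi / real n}. supp_gap C (r *\<^sub>R outer_normal a) t = supp_dist C (r *\<^sub>R outer_normal a)"
proof -
  obtain t where t: "t \<in> {0..pi / real n}" "\<forall>\<phi>. polar_gap C r a t \<le> polar_gap C r a \<phi>"
    using exists_chamber_minimiser[OF r a] by blast
  then have "supp_gap C (r *\<^sub>R outer_normal a) t = supp_dist C (r *\<^sub>R outer_normal a)"
    by (subst supp_gap_argmin_iff) (simp add: supp_gap_polar)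
  then show ?thesis using t by blast
qed

lemma chamber_angle_eq:
  assumes "0 \<le> t" "t \<le> pi / real n" "0 \<le> t'" "t' \<le> pi / real n" "sin t = sin t'" "cos t = cos t'"
  shows "t = t'"
  using cos_inj_pi[of t t'] assms wall_less_pi by auto

lemma supp_gap_chamber:
  assumes e: "e = 1 \<or> e = -1" and p: "p = r *\<^sub>R outer_normal (e * a0 + real_of_int k * rot_step n)"
  shows "supp_gap C p (e * s + real_of_int k * rot_step n) = polar_gap C r a0 s"
  using p supp_gap_polar polar_gap_sym[OF e] by simp

lemma supp_gap_chamber':
  assumes e: "e = 1 \<or> e = -1" and p: "p = r *\<^sub>R outer_normal (e * a0 + real_of_int k * rot_step n)"
  shows "supp_gap C p t = polar_gap C r a0 (e * (t - real_of_int k * rot_step n))"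
proof -
  have "t = e * (e * (t - real_of_int k * rot_step n)) + real_of_int k * rot_step n" using e by auto
  then have "supp_gap C p t = supp_gap C p (e * (e * (t - real_of_int k * rot_step n)) + real_of_int k * rot_step n)" by simp
  also have "\<dots> = polar_gap C r a0 (e * (t - real_of_int k * rot_step n))" by (rule supp_gap_chamber[OF e p])
  finally show ?thesis .
qed

lemma not_unique_foot_imp_polar:
  assumes e: "e = 1 \<or> e = -1" and p: "p = r *\<^sub>R outer_normal (e * a0 + real_of_int k * rot_step n)"
    and nu: "\<not> unique_foot C p"
  shows "\<exists>s1 s2. (\<forall>\<phi>. polar_gap C r a0 s1 \<le> polar_gap C r a0 \<phi>) \<and> (\<forall>\<phi>. polar_gap C r a0 s2 \<le> polar_gap C r a0 \<phi>)
     \<and> \<not> (sin s1 = sin s2 \<and> cos s1 = cos s2)"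
proof -
  obtain t1 t2 where t: "supp_gap C p t1 = supp_dist C p" "supp_gap C p t2 = supp_dist C p" "\<not> (sin t1 = sin t2 \<and> cos t1 = cos t2)"
    using nu unfolding unique_foot_def by blast
  define s1 where "s1 = e * (t1 - real_of_int k * rot_step n)"
  define s2 where "s2 = e * (t2 - real_of_int k * rot_step n)"
  have ts: "t1 = e * s1 + real_of_int k * rot_step n" "t2 = e * s2 + real_of_int k * rot_step n"
    unfolding s1_def s2_def using e by auto
  have m: "\<forall>\<phi>. polar_gap C r a0 si \<le> polar_gap C r a0 \<phi>" if "supp_gap C p ti = supp_dist C p" "ti = e * si + real_of_int k * rot_step n" for si ti
  proof
    fix \<phi>
    have "polar_gap C r a0 si = supp_gap C p ti" using supp_gap_chamber[OF e p] that(2) by simp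
    also have "\<dots> \<le> supp_gap C p (e * \<phi> + real_of_int k * rot_step n)" using that(1) supp_dist_le by simp
    also have "\<dots> = polar_gap C r a0 \<phi>" by (rule supp_gap_chamber[OF e p])
    finally show "polar_gap C r a0 si \<le> polar_gap C r a0 \<phi>" .
  qed
  have "\<not> (sin s1 = sin s2 \<and> cos s1 = cos s2)" using t(3) same_angle_affine_iff[OF e] ts by simp
  then show ?thesis using m[OF t(1) ts(1)] m[OF t(2) ts(2)] by blast
qed

lemma polar_imp_not_unique_foot:
  assumes e: "e = 1 \<or> e = -1" and p: "p = r *\<^sub>R outer_normal (e * a0 + real_of_int k * rot_step n)"
    and s: "\<forall>\<phi>. polar_gap C r a0 s1 \<le> polar_gap C r a0 \<phi>" "\<forall>\<phi>. polar_gap C r a0 s2 \<le> polar_gap C r a0 \<phi>"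
    "\<not> (sin s1 = sin s2 \<and> cos s1 = cos s2)"
  shows "\<not> unique_foot C p"
proof -
  have m: "supp_gap C p (e * si + real_of_int k * rot_step n) = supp_dist C p" if "\<forall>\<phi>. polar_gap C r a0 si \<le> polar_gap C r a0 \<phi>" for si
    unfolding supp_gap_argmin_iff
  proof
    fix \<phi>
    show "supp_gap C p (e * si + real_of_int k * rot_step n) \<le> supp_gap C p \<phi>"
      using supp_gap_chamber[OF e p] supp_gap_chamber'[OF e p] that by simp
  qed
  have "\<not> (sin (e * s1 + real_of_int k * rot_step n) = sin (e * s2 + real_of_int k * rot_step n) \<and>
           cos (e * s1 + real_of_int k * rot_step n) = cos (e * s2 + real_of_int k * rot_step n))"
    using s(3) same_angle_affine_iff[OF e] by simp
  then show ?thesis using m[OF s(1)] m[OF s(2)] unfolding unique_foot_def by blast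
qed

lemma supp_dist_sym:
  assumes e: "e = 1 \<or> e = -1"
  shows "supp_dist C (r *\<^sub>R outer_normal (e * a0 + real_of_int k * rot_step n)) = supp_dist C (r *\<^sub>R outer_normal a0)"
proof -
  define p where "p = r *\<^sub>R outer_normal (e * a0 + real_of_int k * rot_step n)"
  define q where "q = r *\<^sub>R outer_normal a0"
  obtain tp where tp: "supp_dist C p = supp_gap C p tp" using supp_dist_attained by blast
  obtain tq where tq: "supp_dist C q = supp_gap C q tq" using supp_dist_attained by blast
  have "supp_dist C p \<le> supp_gap C p (e * tq + real_of_int k * rot_step n)" by (rule supp_dist_le)
  also have "\<dots> = polar_gap C r a0 tq" using supp_gap_chamber[OF e p_def] .
  also have "\<dots> = supp_dist C q" using tq unfolding q_def by (simp add: supp_gap_polar)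
  finally have a: "supp_dist C p \<le> supp_dist C q" .
  have "supp_dist C q \<le> supp_gap C q (e * (tp - real_of_int k * rot_step n))" by (rule supp_dist_le)
  also have "\<dots> = supp_gap C p tp" using supp_gap_chamber'[OF e p_def] unfolding q_def by (simp add: supp_gap_polar)
  finally have b: "supp_dist C q \<le> supp_dist C p" using tp by simp
  show ?thesis using a b unfolding p_def q_def by simp
qed

lemma arm_supp_dist_pos:
  assumes r: "0 \<le> r" "r < support_fn C 0"
  shows "supp_dist C (r *\<^sub>R outer_normal 0) > 0"
proof -
  have h0: "support_fn C 0 > 0" using r by simp
  define l where "l = r / support_fn C 0"
  have l: "0 \<le> l" "l < 1" unfolding l_def using r h0 by (auto simp: field_simps)
  have "r *\<^sub>R outer_normal 0 = (1 - l) *\<^sub>R (0::pt) + l *\<^sub>R C 0"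
    unfolding l_def curve_0_eq using h0 by simp
  moreover have "(1 - l) * supp_dist C 0 + l * supp_dist C (C 0) \<le> supp_dist C ((1 - l) *\<^sub>R (0::pt) + l *\<^sub>R C 0)"
    using l by (intro supp_dist_concave) auto
  moreover have "supp_dist C (C 0) = 0" using supp_dist_image[OF curve_in_image] .
  moreover have "(1 - l) * supp_dist C 0 > 0" using l supp_dist_origin_pos by simp
  ultimately show ?thesis by simp
qed

end

section \<open>The function \<open>\<Pi>\<close>\<close>

definition axis_height :: "(real \<Rightarrow> pt) \<Rightarrow> real \<Rightarrow> real" where
  "axis_height C t = support_fn' C t / sin t"

context symmetric_curve
begin

lemma PiC_eq_axis_height:
  assumes "0 < t" "t < pi"
  shows "PiC C t = axis_height C t"
proof -
  have s: "sin t > 0" using assms sin_gt_zero by blast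
  define x where "x = fst (C t)"
  define y where "y = snd (C t)"
  have P: "C t + (- x / sin t) *\<^sub>R outer_normal t = (0, axis_height C t)"
  proof -
    have "fst (C t + (- x / sin t) *\<^sub>R outer_normal t) = 0"
      unfolding outer_normal_def x_def using s by simp
    moreover have "snd (C t + (- x / sin t) *\<^sub>R outer_normal t) = axis_height C t"
      unfolding outer_normal_def x_def axis_height_def support_fn'_def using s by (simp add: field_simps)
    ultimately show ?thesis by (simp add: prod_eq_iff)
  qed
  have U: "yy = axis_height C t" if "C t + s' *\<^sub>R outer_normal t = (0, yy)" for s' yy
  proof -
    have e1: "x + s' * sin t = 0" and e2: "y - s' * cos t = yy"
      using that unfolding outer_normal_def x_def y_def by (auto simp: prod_eq_iff)
    have xs: "x = - s' * sin t" using e1 by simp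
    have "axis_height C t = (x * cos t + y * sin t) / sin t" unfolding axis_height_def support_fn'_def x_def y_def by simp
    also have "\<dots> = y - s' * cos t" using s unfolding xs by (simp add: field_simps)
    also have "\<dots> = yy" using e2 by simp
    finally show ?thesis by simp
  qed
  show ?thesis unfolding PiC_def
    by (rule the_equality) (use P U in blast)+
qed

lemma axis_height_tendsto_0: "(axis_height C \<longlongrightarrow> curv_radius C 0 - support_fn C 0) (at 0)"
proof -
  have a: "((\<lambda>t. (support_fn' C t - support_fn' C 0) / (t - 0)) \<longlongrightarrow> curv_radius C 0 - support_fn C 0) (at 0)"
    using support_fn'_has_derivative[of 0] unfolding has_field_derivative_iff by simp
  have b: "((\<lambda>t::real. (sin t - sin 0) / (t - 0)) \<longlongrightarrow> cos 0) (at 0)"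
    using DERIV_sin[of "0::real"] unfolding has_field_derivative_iff by simp
  have "((\<lambda>t. ((support_fn' C t - support_fn' C 0) / (t - 0)) / ((sin t - sin 0) / (t - 0))) \<longlongrightarrow> (curv_radius C 0 - support_fn C 0) / cos 0) (at 0)"
    by (rule tendsto_divide[OF a b]) simp
  moreover have "\<forall>\<^sub>F t in at 0. ((support_fn' C t - support_fn' C 0) / (t - 0)) / ((sin t - sin 0) / (t - 0)) = axis_height C t"
    unfolding eventually_at_filter by (auto simp: support_fn'_0 axis_height_def)
  ultimately show ?thesis by (simp add: tendsto_cong)
qed

lemma PiC_tendsto_0: "(PiC C \<longlongrightarrow> curv_radius C 0 - support_fn C 0) (at_right 0)"
proof -
  have "(axis_height C \<longlongrightarrow> curv_radius C 0 - support_fn C 0) (at_right 0)"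
    using axis_height_tendsto_0 by (rule tendsto_mono[OF at_le, rotated]) simp
  moreover have "\<forall>\<^sub>F t in at_right 0. axis_height C t = PiC C t"
    unfolding eventually_at_right_field
    by (intro exI[of _ pi]) (auto simp: PiC_eq_axis_height)
  ultimately show ?thesis by (simp add: tendsto_cong)
qed

lemma PiC_ext_0: "PiC_ext C 0 = curv_radius C 0 - support_fn C 0"
  unfolding PiC_ext_def using tendsto_Lim[OF trivial_limit_at_right_real PiC_tendsto_0] by simp

lemma PiC_ext_pos: "0 < t \<Longrightarrow> t < pi \<Longrightarrow> PiC_ext C t = axis_height C t"
  unfolding PiC_ext_def using PiC_eq_axis_height by simp

lemma isCont_axis_height: "sin t \<noteq> 0 \<Longrightarrow> isCont (axis_height C) t"
  unfolding axis_height_def[abs_def] by (intro continuous_intros isCont_support_fn') auto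

lemma polar_gap'_eq_axis_height: "sin t \<noteq> 0 \<Longrightarrow> polar_gap' C r a t = sin t * (axis_height C t + r * cos a) - r * sin a * cos t"
  unfolding polar_gap'_def axis_height_def by (simp add: sin_diff algebra_simps)

lemma polar_gap'_0_neg: "0 < a \<Longrightarrow> a \<le> pi / real n \<Longrightarrow> r > 0 \<Longrightarrow> polar_gap' C r a 0 < 0"
  unfolding polar_gap'_def using support_fn'_0 sin_pos_chamber[of a] by simp

lemma polar_gap'_on_axis_pos:
  assumes mono: "mono_on {0..pi / real n} (PiC_ext C)" and r: "r > - (curv_radius C 0 - support_fn C 0)"
    and s: "0 < s" "s \<le> pi / real n"
  shows "polar_gap' C r 0 s > 0"
proof -
  have "PiC_ext C 0 \<le> PiC_ext C s" using mono s wall_pos by (intro mono_onD[OF mono]) auto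
  then have "axis_height C s \<ge> curv_radius C 0 - support_fn C 0" using PiC_ext_0 PiC_ext_pos[of s] s wall_less_pi by auto
  then have "axis_height C s + r > 0" using r by simp
  moreover have "sin s > 0" using sin_pos_chamber s by auto
  ultimately show ?thesis using polar_gap'_eq_axis_height[of s r 0] by simp
qed

end

section \<open>Monotone \<open>\<Pi>\<close>: the skeleton is the star\<close>

context symmetric_curve
begin

lemma polar_gap'_zero_unique:
  assumes mono: "mono_on {0..pi / real n} (PiC_ext C)" and r: "r > 0"
    and a: "0 < a" "a \<le> pi / real n"
    and s: "0 < s" "s \<le> pi / real n" and s': "0 < s'" "s' \<le> pi / real n"
    and z: "polar_gap' C r a s = 0" "polar_gap' C r a s' = 0"
  shows "s = s'"
proof (rule ccontr)
  assume ne: "s \<noteq> s'"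
  have key: False if lt: "u < u'" and u: "0 < u" "u' \<le> pi / real n"
    and zu: "polar_gap' C r a u = 0" "polar_gap' C r a u' = 0" for u u'
  proof -
    have su: "sin u > 0" "sin u' > 0" using sin_pos_chamber u lt by auto
    have sa: "sin a > 0" using sin_pos_chamber a by auto
    have pm: "axis_height C u \<le> axis_height C u'"
    proof -
      have "PiC_ext C u \<le> PiC_ext C u'"
        using mono u lt by (intro mono_onD[OF mono]) auto
      moreover have "u < pi" "u' < pi" using u lt wall_less_pi by auto
      ultimately show ?thesis using PiC_ext_pos u lt by auto
    qed
    have "cos u' / sin u' < cos u / sin u" using cot_strict_decreasing[of u u'] u lt wall_less_pi by auto
    then have c: "r * sin a * (cos u' / sin u') < r * sin a * (cos u / sin u)"
      by (intro mult_strict_left_mono) (use r sa in auto)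
    have q: "axis_height C v + r * cos a - r * sin a * (cos v / sin v) = 0" if "sin v > 0" "polar_gap' C r a v = 0" for v
    proof -
      have "sin v * (axis_height C v + r * cos a) - r * sin a * cos v = 0" using polar_gap'_eq_axis_height that by simp
      then have "sin v * (axis_height C v + r * cos a - r * sin a * (cos v / sin v)) = 0"
        using that by (simp add: field_simps)
      then show ?thesis using that by simp
    qed
    show False using q[OF su(1) zu(1)] q[OF su(2) zu(2)] pm c by linarith
  qed
  show False
  proof (cases "s < s'")
    case True then show ?thesis using key[of s s'] s s' z by auto
  next
    case False then have "s' < s" using ne by simp
    then show ?thesis using key[of s' s] s s' z by auto
  qed
qed

lemma chamber_minimiser_unique:
  assumes mono: "mono_on {0..pi / real n} (PiC_ext C)" and r: "r > 0"
    and a: "0 \<le> a" "a \<le> pi / real n" and na: "\<not> (a = 0 \<and> r \<le> - (curv_radius C 0 - support_fn C 0))"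
    and t: "0 \<le> t" "t \<le> pi / real n" "\<forall>\<phi>. polar_gap C r a t \<le> polar_gap C r a \<phi>"
    and t': "0 \<le> t'" "t' \<le> pi / real n" "\<forall>\<phi>. polar_gap C r a t' \<le> polar_gap C r a \<phi>"
  shows "t = t'"
proof (cases "a = 0")
  case True
  then have rr: "r > - (curv_radius C 0 - support_fn C 0)" using na by simp
  have "u = 0" if "0 \<le> u" "u \<le> pi / real n" "\<forall>\<phi>. polar_gap C r a u \<le> polar_gap C r a \<phi>" for u
  proof (rule ccontr)
    assume "u \<noteq> 0"
    then have "polar_gap' C r 0 u > 0" using polar_gap'_on_axis_pos[OF mono rr] that by simp
    then show False using polar_gap'_minimiser[OF that(3)] True by simp
  qed
  then show ?thesis using t t' by metis
next
  case False
  then have a0: "0 < a" using a by simp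
  have pos: "0 < u" if "0 \<le> u" "\<forall>\<phi>. polar_gap C r a u \<le> polar_gap C r a \<phi>" for u
  proof (rule ccontr)
    assume "\<not> 0 < u"
    then have "u = 0" using that by simp
    then show False using polar_gap'_minimiser[OF that(2)] polar_gap'_0_neg[OF a0 a(2) r] by simp
  qed
  show ?thesis
    by (rule polar_gap'_zero_unique[OF mono r a0 a(2) pos[OF t(1,3)] t(2) pos[OF t'(1,3)] t'(2)
          polar_gap'_minimiser[OF t(3)] polar_gap'_minimiser[OF t'(3)]])
qed

lemma minimiser_same_angle:
  assumes r: "r > 0" and a: "0 \<le> a" "a \<le> pi / real n"
    and ts: "0 \<le> ts" "ts \<le> pi / real n" "\<forall>\<phi>. polar_gap C r a ts \<le> polar_gap C r a \<phi>"
    and cu: "\<And>u. 0 \<le> u \<Longrightarrow> u \<le> pi / real n \<Longrightarrow> \<forall>\<phi>. polar_gap C r a u \<le> polar_gap C r a \<phi> \<Longrightarrow> u = ts"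
    and ph: "\<forall>\<psi>. polar_gap C r a \<phi> \<le> polar_gap C r a \<psi>"
    and psi_case: "\<And>\<psi>. \<psi> = 2 * a - ts \<Longrightarrow> \<forall>ww. polar_gap C r a \<psi> \<le> polar_gap C r a ww \<Longrightarrow> \<psi> = ts"
  shows "sin \<phi> = sin ts \<and> cos \<phi> = cos ts"
proof -
  obtain t' e k where d: "0 \<le> t'" "t' \<le> pi / real n" "e = 1 \<or> e = -1" "\<phi> = e * t' + real_of_int k * rot_step n"
    "polar_gap C r a t' \<le> polar_gap C r a \<phi>"
    using obtain_chamber_representative[OF less_imp_le[OF r] a] by metis
  have t'min: "\<forall>\<psi>. polar_gap C r a t' \<le> polar_gap C r a \<psi>" using d(5) ph by (meson order_trans)
  then have t'ts: "t' = ts" using cu d(1,2) by blast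
  have eqF: "polar_gap C r a \<phi> = polar_gap C r a t'" using d(5) ph[rule_format, of t'] by simp
  have "support_fn C \<phi> = support_fn C t'" using d(3,4) support_fn_sym by simp
  then have "r * cos (\<phi> - a) = r * cos (ts - a)" using eqF t'ts unfolding polar_gap_def by simp
  then have ce: "cos (\<phi> - a) = cos (ts - a)" using r by simp
  from cos_eq_cases[OF ce] show ?thesis
  proof
    assume "sin (\<phi> - a) = sin (ts - a) \<and> cos (\<phi> - a) = cos (ts - a)"
    then obtain j :: int where "\<phi> - a = ts - a + 2 * pi * j" using sin_cos_eq_iff by metis
    then have "\<phi> = ts + 2 * pi * j" by simp
    then show ?thesis by (metis sin_cos_eq_iff)
  next
    assume "\<exists>k::int. \<phi> - a = - (ts - a) + 2 * pi * k"
    then obtain j :: int where j: "\<phi> = (2 * a - ts) + 2 * pi * j" by (auto simp: algebra_simps)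
    have "polar_gap C r a (2 * a - ts) = polar_gap C r a \<phi>" using polar_gap_periodic[of r a "2 * a - ts" j] j by simp
    then have "\<forall>ww. polar_gap C r a (2 * a - ts) \<le> polar_gap C r a ww" using ph by simp
    then have "2 * a - ts = ts" using psi_case by blast
    then have "\<phi> = ts + 2 * pi * j" using j by simp
    then show ?thesis by (metis sin_cos_eq_iff)
  qed
qed

lemma reflected_minimiser_eq:
  assumes mono: "mono_on {0..pi / real n} (PiC_ext C)" and r: "r > 0"
    and a: "0 \<le> a" "a \<le> pi / real n" and na: "\<not> (a = 0 \<and> r \<le> - (curv_radius C 0 - support_fn C 0))"
    and ts: "ts \<in> {0..pi / real n}" "\<forall>\<phi>. polar_gap C r a ts \<le> polar_gap C r a \<phi>"
    and cu: "\<And>u. 0 \<le> u \<Longrightarrow> u \<le> pi / real n \<Longrightarrow> \<forall>\<phi>. polar_gap C r a u \<le> polar_gap C r a \<phi> \<Longrightarrow> u = ts"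
    and psi: "\<psi> = 2 * a - ts" and pm: "\<forall>ww. polar_gap C r a \<psi> \<le> polar_gap C r a ww"
  shows "\<psi> = ts"
proof -
  have c2: "rot_step n = 2 * (pi / real n)" using rot_step_half by simp
  consider "0 \<le> \<psi> \<and> \<psi> \<le> pi / real n" | "\<psi> < 0" | "\<psi> > pi / real n" by linarith
  then show ?thesis
  proof cases
    case 1 then show ?thesis using cu pm by blast
  next
    case 2
    define t'' where "t'' = - \<psi>"
    have t'': "0 \<le> t''" "t'' \<le> pi / real n" using 2 psi ts a unfolding t''_def by auto
    have "cos ((-1) * t'' + real_of_int 0 * rot_step n - a) \<le> cos (t'' - a)"
      by (rule cos_folded_le[OF a t'']) simp
    moreover have "support_fn C ((-1) * t'' + real_of_int 0 * rot_step n) = support_fn C t''" by (rule support_fn_sym) simp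
    ultimately have "polar_gap C r a t'' \<le> polar_gap C r a \<psi>" unfolding polar_gap_def t''_def using r
      by (simp add: mult_left_mono)
    then have "\<forall>ww. polar_gap C r a t'' \<le> polar_gap C r a ww" using pm by (meson order_trans)
    then have "t'' = ts" using cu t'' by blast
    then have a0: "a = 0" using psi unfolding t''_def by simp
    then have rr: "r > - (curv_radius C 0 - support_fn C 0)" using na by simp
    have "ts > 0" using \<open>t'' = ts\<close> 2 unfolding t''_def by simp
    then have "polar_gap' C r 0 ts > 0" using polar_gap'_on_axis_pos[OF mono rr] ts by simp
    then show ?thesis using polar_gap'_minimiser[OF ts(2)] a0 by simp
  next
    case 3
    define t'' where "t'' = rot_step n - \<psi>"
    have t'': "0 \<le> t''" "t'' \<le> pi / real n" using 3 psi ts a c2 unfolding t''_def by auto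
    have "cos ((-1) * t'' + real_of_int 1 * rot_step n - a) \<le> cos (t'' - a)"
      by (rule cos_folded_le[OF a t'']) simp
    moreover have "support_fn C ((-1) * t'' + real_of_int 1 * rot_step n) = support_fn C t''" by (rule support_fn_sym) simp
    ultimately have "polar_gap C r a t'' \<le> polar_gap C r a \<psi>" unfolding polar_gap_def t''_def using r
      by (simp add: mult_left_mono)
    then have "\<forall>ww. polar_gap C r a t'' \<le> polar_gap C r a ww" using pm by (meson order_trans)
    then have "t'' = ts" using cu t'' by blast
    then have ah: "a = pi / real n" using psi c2 unfolding t''_def by simp
    then have a0: "0 < a" using wall_pos by simp
    have "ts > 0"
    proof (rule ccontr)
      assume "\<not> ts > 0" then have "ts = 0" using ts by simp
      then show False using polar_gap'_minimiser[OF ts(2)] polar_gap'_0_neg[OF a0 a(2) r] by simp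
    qed
    have "polar_gap' C r a (pi / real n) = 0" unfolding polar_gap'_def using ah support_fn'_wall by simp
    then have "ts = pi / real n"
      using polar_gap'_zero_unique[OF mono r a0 a(2) \<open>ts > 0\<close> _ wall_pos order_refl polar_gap'_minimiser[OF ts(2)]] ts by simp
    then show ?thesis using psi ah by simp
  qed
qed

lemma polar_minimiser_unique:
  assumes mono: "mono_on {0..pi / real n} (PiC_ext C)" and r: "r > 0"
    and a: "0 \<le> a" "a \<le> pi / real n" and na: "\<not> (a = 0 \<and> r \<le> - (curv_radius C 0 - support_fn C 0))"
    and m1: "\<forall>\<phi>. polar_gap C r a t1 \<le> polar_gap C r a \<phi>" and m2: "\<forall>\<phi>. polar_gap C r a t2 \<le> polar_gap C r a \<phi>"
  shows "sin t1 = sin t2 \<and> cos t1 = cos t2"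
proof -
  obtain ts where ts: "ts \<in> {0..pi / real n}" "\<forall>\<phi>. polar_gap C r a ts \<le> polar_gap C r a \<phi>"
    using exists_chamber_minimiser[OF less_imp_le[OF r] a] by blast
  have cu: "u = ts" if "0 \<le> u" "u \<le> pi / real n" "\<forall>\<phi>. polar_gap C r a u \<le> polar_gap C r a \<phi>" for u
    using chamber_minimiser_unique[OF mono r a na that] ts by auto
  have "sin t1 = sin ts \<and> cos t1 = cos ts"
    by (rule minimiser_same_angle[OF r a _ _ ts(2) cu m1 reflected_minimiser_eq[OF mono r a na ts cu]]) (use ts in auto)
  moreover have "sin t2 = sin ts \<and> cos t2 = cos ts"
    by (rule minimiser_same_angle[OF r a _ _ ts(2) cu m2 reflected_minimiser_eq[OF mono r a na ts cu]]) (use ts in auto)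
  ultimately show ?thesis by simp
qed

lemma arm_minimisers_not_unique:
  assumes r: "0 < r" "r < - (curv_radius C 0 - support_fn C 0)"
  shows "\<exists>t1 t2. (\<forall>\<phi>. polar_gap C r 0 t1 \<le> polar_gap C r 0 \<phi>) \<and> (\<forall>\<phi>. polar_gap C r 0 t2 \<le> polar_gap C r 0 \<phi>)
     \<and> \<not> (sin t1 = sin t2 \<and> cos t1 = cos t2)"
proof -
  obtain ts where ts: "ts \<in> {0..pi / real n}" "\<forall>\<phi>. polar_gap C r 0 ts \<le> polar_gap C r 0 \<phi>"
    using exists_chamber_minimiser[of r 0] r wall_pos by auto
  have "ts \<noteq> 0"
  proof
    assume ts0: "ts = 0"
    have "\<forall>\<^sub>F s in at_right 0. PiC C s < - r"
      using order_tendstoD(2)[OF PiC_tendsto_0] r by simp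
    then obtain b where b: "b > 0" "\<And>s. 0 < s \<Longrightarrow> s < b \<Longrightarrow> PiC C s < - r"
      unfolding eventually_at_right_field by auto
    define d where "d = min (b / 2) (pi / real n)"
    have d: "0 < d" "d < b" "d \<le> pi / real n" unfolding d_def using b wall_pos by auto
    have "polar_gap C r 0 d < polar_gap C r 0 0"
    proof (rule DERIV_neg_imp_decreasing_open[OF d(1)])
      fix x assume x: "0 < x" "x < d"
      have xpi: "x < pi" using x d wall_less_pi by simp
      have sx: "sin x > 0" using x d sin_pos_chamber by simp
      have "axis_height C x < - r" using b(2)[of x] x d PiC_eq_axis_height[of x] xpi by simp
      then have "polar_gap' C r 0 x < 0" using polar_gap'_eq_axis_height[of x r 0] sx by (simp add: mult_pos_neg)
      then show "\<exists>y. DERIV (polar_gap C r 0) x :> y \<and> y < 0" using polar_gap_has_derivative by blast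
    next
      show "continuous_on {0..d} (polar_gap C r 0)" by (intro continuous_at_imp_continuous_on ballI isCont_polar_gap)
    qed
    then show False using ts(2) ts0 by (meson not_le)
  qed
  then have tsp: "ts > 0" using ts by simp
  have "polar_gap C r 0 (- ts) = polar_gap C r 0 ts"
    using polar_gap_sym[of "-1" r 0 0 ts] by simp
  then have m2: "\<forall>\<phi>. polar_gap C r 0 (- ts) \<le> polar_gap C r 0 \<phi>" using ts by simp
  have "sin ts > 0" using sin_pos_chamber tsp ts by simp
  then have "\<not> (sin ts = sin (- ts) \<and> cos ts = cos (- ts))" by simp
  then show ?thesis using ts(2) m2 by blast
qed

lemma origin_minimisers_not_unique:
  "\<exists>t1 t2. (\<forall>\<phi>. polar_gap C 0 0 t1 \<le> polar_gap C 0 0 \<phi>) \<and> (\<forall>\<phi>. polar_gap C 0 0 t2 \<le> polar_gap C 0 0 \<phi>)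
     \<and> \<not> (sin t1 = sin t2 \<and> cos t1 = cos t2)"
proof -
  obtain ts where ts: "ts \<in> {0..pi / real n}" "\<forall>\<phi>. polar_gap C 0 0 ts \<le> polar_gap C 0 0 \<phi>"
    using exists_chamber_minimiser[of 0 0] wall_pos by auto
  have "polar_gap C 0 0 (1 * ts + real_of_int 1 * rot_step n) = polar_gap C 0 0 ts"
    unfolding polar_gap_def using support_fn_sym[of 1 ts 1] by simp
  then have m2: "\<forall>\<phi>. polar_gap C 0 0 (ts + rot_step n) \<le> polar_gap C 0 0 \<phi>" using ts by simp
  have "\<not> (sin ts = sin (ts + rot_step n) \<and> cos ts = cos (ts + rot_step n))"
  proof
    assume "sin ts = sin (ts + rot_step n) \<and> cos ts = cos (ts + rot_step n)"
    then obtain k :: int where "ts = ts + rot_step n + 2 * pi * k" using sin_cos_eq_iff by metis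
    then have "rot_step n = 2 * pi * real_of_int (- k)" by simp
    then show False using rot_step_not_period by blast
  qed
  then show ?thesis using ts(2) m2 by blast
qed

lemma axis_limit_nonpos: "mono_on {0..pi / real n} (PiC_ext C) \<Longrightarrow> curv_radius C 0 - support_fn C 0 \<le> 0"
proof -
  assume mono: "mono_on {0..pi / real n} (PiC_ext C)"
  have "PiC_ext C 0 \<le> PiC_ext C (pi / real n)" using wall_pos by (intro mono_onD[OF mono]) auto
  moreover have "PiC_ext C (pi / real n) = 0" using PiC_ext_pos[OF wall_pos wall_less_pi] support_fn'_wall unfolding axis_height_def by simp
  ultimately show ?thesis using PiC_ext_0 by simp
qed

lemma arm_in_singular_set:
  assumes r: "0 \<le> r" "r = 0 \<or> r < - (curv_radius C 0 - support_fn C 0)"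
  shows "r *\<^sub>R outer_normal (real k * rot_step n) \<in> singular_set"
proof -
  define p where "p = r *\<^sub>R outer_normal (real k * rot_step n)"
  have p': "p = r *\<^sub>R outer_normal (1 * 0 + real_of_int (int k) * rot_step n)" unfolding p_def by simp
  have "r < support_fn C 0" 
  proof -
    have "support_fn C 0 \<ge> supp_dist C 0" using supp_dist_le[of 0 0] unfolding supp_gap_def by simp
    then have "support_fn C 0 > 0" using supp_dist_origin_pos by simp
    then show ?thesis using r curv_radius_pos[of 0] by auto
  qed
  then have "supp_dist C (r *\<^sub>R outer_normal 0) > 0" by (rule arm_supp_dist_pos[OF r(1)])
  moreover have "supp_dist C p = supp_dist C (r *\<^sub>R outer_normal 0)"
    unfolding p' by (rule supp_dist_sym) simp
  ultimately have "supp_dist C p > 0" by simp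
  then have dom: "p \<in> domain C" using domain_eq_supp_dist_pos by simp
  have nu: "\<not> unique_foot C p"
  proof (cases "r = 0")
    case True
    obtain t1 t2 where "\<forall>\<phi>. polar_gap C 0 0 t1 \<le> polar_gap C 0 0 \<phi>" "\<forall>\<phi>. polar_gap C 0 0 t2 \<le> polar_gap C 0 0 \<phi>"
      "\<not> (sin t1 = sin t2 \<and> cos t1 = cos t2)" using origin_minimisers_not_unique by blast
    then show ?thesis using polar_imp_not_unique_foot[of 1 p 0 0 "int k"] p' True by simp
  next
    case False
    then have "0 < r" "r < - (curv_radius C 0 - support_fn C 0)" using r by auto
    then obtain t1 t2 where "\<forall>\<phi>. polar_gap C r 0 t1 \<le> polar_gap C r 0 \<phi>" "\<forall>\<phi>. polar_gap C r 0 t2 \<le> polar_gap C r 0 \<phi>"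
      "\<not> (sin t1 = sin t2 \<and> cos t1 = cos t2)" using arm_minimisers_not_unique by blast
    then show ?thesis using polar_imp_not_unique_foot[of 1 p r 0 "int k"] p' by simp
  qed
  then show ?thesis using infdist_differentiable_iff_unique_foot[OF dom] dom unfolding p_def by simp
qed

lemma singular_set_subset_axis_star:
  assumes mono: "mono_on {0..pi / real n} (PiC_ext C)"
  shows "singular_set \<subseteq> axis_star n (curv_radius C 0 - support_fn C 0)"
proof
  let ?L = "curv_radius C 0 - support_fn C 0"
  fix p assume p: "p \<in> singular_set"
  then have nu: "\<not> unique_foot C p" using infdist_differentiable_iff_unique_foot by blast
  obtain r a where ra: "r \<ge> 0" "p = r *\<^sub>R outer_normal a" by (rule obtain_polar)
  obtain e a0 k where d: "e = 1 \<or> e = -1" "0 \<le> a0" "a0 \<le> pi / real n" "a = e * a0 + real_of_int k * rot_step n"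
    by (rule obtain_chamber_angle)
  show "p \<in> axis_star n ?L"
  proof (cases "r = 0")
    case True
    then show ?thesis using ra axis_limit_nonpos[OF mono] n_pos axis_starI[of 0 ?L 0] by simp
  next
    case False
    then have "r > 0" using ra by simp
    have p: "p = r *\<^sub>R outer_normal (e * a0 + real_of_int k * rot_step n)" using ra d by simp
    obtain s1 s2 where s: "\<forall>\<phi>. polar_gap C r a0 s1 \<le> polar_gap C r a0 \<phi>" "\<forall>\<phi>. polar_gap C r a0 s2 \<le> polar_gap C r a0 \<phi>"
      "\<not> (sin s1 = sin s2 \<and> cos s1 = cos s2)" using not_unique_foot_imp_polar[OF d(1) p nu] by blast
    have "a0 = 0" "r \<le> - ?L"
      using polar_minimiser_unique[OF mono \<open>r > 0\<close> d(2,3) _ s(1,2)] s(3) by blast+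
    obtain k' where "k' < n" "outer_normal (real_of_int k * rot_step n) = outer_normal (real k' * rot_step n)"
      by (rule obtain_nat_rotation[OF n_pos])
    then show ?thesis using p \<open>a0 = 0\<close> \<open>r \<le> - ?L\<close> ra(1) axis_starI[of r ?L k'] by simp
  qed
qed

lemma axis_star_subset_closure_singular_set:
  "axis_star n (curv_radius C 0 - support_fn C 0) \<subseteq> closure singular_set"
proof
  let ?L = "curv_radius C 0 - support_fn C 0"
  fix x assume "x \<in> axis_star n ?L"
  then obtain r k where r: "0 \<le> r" "r \<le> - ?L" "k < n" and x: "x = r *\<^sub>R outer_normal (real k * rot_step n)"
    by (rule axis_starE)
  show "x \<in> closure singular_set"
  proof (cases "r = 0 \<or> r < - ?L")
    case True
    then have "x \<in> singular_set" unfolding x using r(1) by (rule arm_in_singular_set[rotated])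
    then show ?thesis by (rule closure_subset[THEN subsetD])
  next
    case False
    then have r: "r = - ?L" "r > 0" using r by auto
    show ?thesis unfolding closure_approachable
    proof (intro allI impI)
      fix \<epsilon> :: real assume "\<epsilon> > 0"
      define r' where "r' = max (r / 2) (r - \<epsilon> / 2)"
      have r': "0 < r'" "r' < r" "r - r' < \<epsilon>" unfolding r'_def using r \<open>\<epsilon> > 0\<close> by (auto simp: max_def field_simps)
      define y where "y = r' *\<^sub>R outer_normal (real k * rot_step n)"
      have "y \<in> singular_set" unfolding y_def using r r' by (intro arm_in_singular_set) auto
      moreover have "dist y x = \<bar>r' - r\<bar>"
        unfolding x y_def dist_norm by (simp add: norm_outer_normal flip: scaleR_diff_left)
      ultimately show "\<exists>y\<in>singular_set. dist y x < \<epsilon>" using r'(2,3) by (intro bexI[of _ y]) auto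
    qed
  qed
qed

lemma skeleton_if_mono:
  assumes "mono_on {0..pi / real n} (PiC_ext C)"
  shows "skeleton C = Gn_orbit n ({0} \<times> {PiC_ext C 0..0})"
proof -
  have "closure singular_set \<subseteq> axis_star n (curv_radius C 0 - support_fn C 0)"
    using singular_set_subset_axis_star[OF assms] closed_axis_star by (rule closure_minimal)
  then have "closure singular_set = axis_star n (curv_radius C 0 - support_fn C 0)"
    using axis_star_subset_closure_singular_set by (rule equalityI)
  then show ?thesis using skeleton_eq Gn_orbit_axis_segment[OF n_pos] PiC_ext_0 by simp
qed

end

section \<open>A star skeleton forces \<open>\<Pi>\<close> to be monotone\<close>

definition chamber_argmin :: "nat \<Rightarrow> (real \<Rightarrow> pt) \<Rightarrow> pt \<Rightarrow> real" where
  "chamber_argmin n C p = (THE t. t \<in> {0..pi / real n} \<and> supp_gap C p t = supp_dist C p)"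

definition vline_point :: "real \<Rightarrow> real \<Rightarrow> pt" where
  "vline_point \<epsilon> a = (\<epsilon> / sin a) *\<^sub>R outer_normal a"

lemma fst_vline_point: "sin a \<noteq> 0 \<Longrightarrow> fst (vline_point \<epsilon> a) = \<epsilon>"
  unfolding vline_point_def outer_normal_def by simp

lemma snd_vline_point: "snd (vline_point \<epsilon> a) = - \<epsilon> * (cos a / sin a)"
  unfolding vline_point_def outer_normal_def by simp

lemma isCont_vline_point: "sin a \<noteq> 0 \<Longrightarrow> isCont (vline_point \<epsilon>) a"
  unfolding vline_point_def[abs_def] outer_normal_def by (intro continuous_intros) auto

lemma vline_point_between:
  assumes "0 < b" "b < a" "a < c" "c < pi" "\<epsilon> > 0"
  obtains l where "0 < l" "l < 1" "vline_point \<epsilon> a = (1 - l) *\<^sub>R vline_point \<epsilon> b + l *\<^sub>R vline_point \<epsilon> c"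
proof -
  have sin_pos: "sin x > 0" if "b \<le> x" "x \<le> c" for x
    using that assms by (intro sin_gt_zero) auto
  define y where "y x = snd (vline_point \<epsilon> x)" for x
  have "\<epsilon> * (cos a / sin a) < \<epsilon> * (cos b / sin b)" "\<epsilon> * (cos c / sin c) < \<epsilon> * (cos a / sin a)"
    using mult_strict_left_mono[OF cot_strict_decreasing[of b a] assms(5)]
      mult_strict_left_mono[OF cot_strict_decreasing[of a c] assms(5)] assms by simp_all
  then have y: "y b < y a" "y a < y c" unfolding y_def snd_vline_point by linarith+
  define l where "l = (y a - y b) / (y c - y b)"
  have l: "0 < l" "l < 1" unfolding l_def using y by (auto simp: field_simps)
  have "l * (y c - y b) = y a - y b" unfolding l_def using y by simp
  then have "snd (vline_point \<epsilon> a) = snd ((1 - l) *\<^sub>R vline_point \<epsilon> b + l *\<^sub>R vline_point \<epsilon> c)"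
    unfolding y_def by (simp add: algebra_simps)
  moreover have "fst (vline_point \<epsilon> a) = fst ((1 - l) *\<^sub>R vline_point \<epsilon> b + l *\<^sub>R vline_point \<epsilon> c)"
    using sin_pos[of a] sin_pos[of b] sin_pos[of c] assms
    by (simp add: fst_vline_point algebra_simps)
  ultimately show ?thesis using that[OF l] by (simp add: prod_eq_iff)
qed

context symmetric_curve
begin

lemma sector_not_in_axis_star:
  assumes r: "r > 0" and a: "0 < a" "a \<le> pi / real n"
  shows "r *\<^sub>R outer_normal a \<notin> axis_star n L"
proof
  assume "r *\<^sub>R outer_normal a \<in> axis_star n L"
  then obtain r' k where r': "0 \<le> r'" "k < n" and eq: "r *\<^sub>R outer_normal a = r' *\<^sub>R outer_normal (real k * rot_step n)"
    by (rule axis_starE) auto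
  have "norm (r *\<^sub>R outer_normal a) = r" using r norm_outer_normal by simp
  moreover have "norm (r' *\<^sub>R outer_normal (real k * rot_step n)) = r'" using r' norm_outer_normal by simp
  ultimately have rr: "r = r'" using eq by simp
  then have "outer_normal a = outer_normal (real k * rot_step n)" using eq r by simp
  then have "sin a = sin (real k * rot_step n) \<and> cos a = cos (real k * rot_step n)"
    unfolding outer_normal_def by simp
  then obtain j :: int where j: "a = real k * rot_step n + 2 * pi * j" using sin_cos_eq_iff by metis
  then have "a = real_of_int (int k + int n * j) * rot_step n" using two_pi_eq_rot_step[OF n_pos] by (simp add: algebra_simps)
  then obtain m :: int where m: "a = real_of_int m * rot_step n" by blast
  have "0 < real_of_int m * rot_step n" using a m by simp
  then have "m > 0" using rot_step_pos by (simp add: zero_less_mult_iff)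
  then have "real_of_int m * rot_step n \<ge> rot_step n" using rot_step_pos by simp
  then show False using a m rot_step_half rot_step_pos by linarith
qed

lemma snd_eq_axis_height_of_argmin:
  assumes "supp_gap C p t = supp_dist C p" "sin t > 0"
  shows "snd p = axis_height C t - fst p * (cos t / sin t)"
proof -
  have "supp_gap' C p t = 0" using supp_gap'_argmin assms(1) by simp
  then show ?thesis using assms(2) unfolding supp_gap'_def axis_height_def by (simp add: field_simps)
qed

lemma vline_argmins_ordered:
  assumes "sin a1 \<noteq> 0" "sin a2 \<noteq> 0" and t: "0 < t1" "t1 < t2" "t2 < pi"
    and m1: "supp_gap C (vline_point \<epsilon> a1) t1 = supp_dist C (vline_point \<epsilon> a1)"
    and m2: "supp_gap C (vline_point \<epsilon> a2) t2 = supp_dist C (vline_point \<epsilon> a2)"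
  shows "axis_height C t1 - \<epsilon> * (cos t1 / sin t1) \<le> axis_height C t2 - \<epsilon> * (cos t2 / sin t2)"
proof -
  define y1 where "y1 = snd (vline_point \<epsilon> a1)"
  define y2 where "y2 = snd (vline_point \<epsilon> a2)"
  have coord: "normal_coord (vline_point \<epsilon> a1 - vline_point \<epsilon> a2) t = (y2 - y1) * cos t" for t
    unfolding normal_coord_def y1_def y2_def using assms(1,2) by (simp add: fst_vline_point algebra_simps)
  have "cos t2 < cos t1" using t by (intro cos_monotone_0_pi) auto
  moreover have "(y2 - y1) * cos t2 \<le> (y2 - y1) * cos t1"
    using argmin_monotone[OF m1 m2] unfolding coord .
  ultimately have "y1 \<le> y2"
    using mult_strict_left_mono_neg[of "cos t2" "cos t1" "y2 - y1"] by linarith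
  moreover have "sin t1 > 0" "sin t2 > 0" using t by (auto intro!: sin_gt_zero)
  then have "y1 = axis_height C t1 - \<epsilon> * (cos t1 / sin t1)" "y2 = axis_height C t2 - \<epsilon> * (cos t2 / sin t2)"
    unfolding y1_def y2_def
    using snd_eq_axis_height_of_argmin[OF m1] snd_eq_axis_height_of_argmin[OF m2]
      fst_vline_point[OF assms(1)] fst_vline_point[OF assms(2)] by simp_all
  ultimately show ?thesis by simp
qed

lemma supp_dist_vline_wall_pos:
  assumes "0 < \<epsilon>" "\<epsilon> \<le> supp_dist C 0 * sin (pi / real n) / 2"
  shows "supp_dist C (vline_point \<epsilon> (pi / real n)) > 0"
proof -
  have s: "sin (pi / real n) > 0" using sin_pos_chamber wall_pos by simp
  have "dist (vline_point \<epsilon> (pi / real n)) 0 = \<epsilon> / sin (pi / real n)"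
    using s assms(1) by (simp add: vline_point_def norm_outer_normal)
  also have "\<dots> \<le> supp_dist C 0 / 2" using assms s by (simp add: field_simps)
  finally show ?thesis
    using supp_dist_lipschitz[of "vline_point \<epsilon> (pi / real n)" 0] supp_dist_origin_pos by linarith
qed

lemma supp_dist_vline_low_neg:
  assumes "0 < \<epsilon>"
  obtains a where "0 < a" "a < pi / real n" "supp_dist C (vline_point \<epsilon> a) < 0"
proof -
  have "((cos :: real \<Rightarrow> real) \<longlongrightarrow> cos 0) (at_right 0)"
    by (rule tendsto_cos[OF tendsto_ident_at])
  moreover have "((sin :: real \<Rightarrow> real) \<longlongrightarrow> sin 0) (at_right 0)"
    by (rule tendsto_sin[OF tendsto_ident_at])
  moreover have "\<forall>\<^sub>F a in at_right (0::real). 0 < sin a"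
    unfolding eventually_at_right_field by (intro exI[of _ pi]) (auto intro: sin_gt_zero)
  ultimately have "filterlim (\<lambda>a::real. cos a / sin a) at_top (at_right 0)"
    using LIM_at_top_divide[of cos 1 "at_right (0::real)" sin] by simp
  then have ev1: "\<forall>\<^sub>F a in at_right 0. support_fn C 0 / \<epsilon> + 1 \<le> cos a / sin a"
    unfolding filterlim_at_top by blast
  have ev2: "\<forall>\<^sub>F a in at_right 0. a < pi / real n"
    unfolding eventually_at_right_field by (intro exI[of _ "pi / real n"]) (simp add: wall_pos)
  obtain a where a: "0 < a" "a < pi / real n" "support_fn C 0 / \<epsilon> + 1 \<le> cos a / sin a"
    using eventually_happens'[OF trivial_limit_at_right_real
        eventually_conj[OF eventually_at_right_less eventually_conj[OF ev2 ev1]]] by blast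
  have "supp_dist C (vline_point \<epsilon> a) \<le> support_fn C 0 + snd (vline_point \<epsilon> a)"
    using supp_dist_le[of "vline_point \<epsilon> a" 0] unfolding supp_gap_def by simp
  also have "\<dots> = support_fn C 0 - \<epsilon> * (cos a / sin a)" by (simp add: snd_vline_point)
  also have "\<dots> < 0" using a(3) assms by (simp add: field_simps)
  finally show ?thesis using that a(1,2) by blast
qed

lemma vline_boundary_crossing:
  assumes "0 < \<epsilon>" "\<epsilon> \<le> supp_dist C 0 * sin (pi / real n) / 2"
  obtains b where "0 < b" "b < pi / real n" "supp_dist C (vline_point \<epsilon> b) = 0"
    "\<And>a. b < a \<Longrightarrow> a \<le> pi / real n \<Longrightarrow> supp_dist C (vline_point \<epsilon> a) > 0"
proof -
  let ?w = "pi / real n" and ?\<Phi> = "\<lambda>a. supp_dist C (vline_point \<epsilon> a)"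
  have top: "?\<Phi> ?w > 0" by (rule supp_dist_vline_wall_pos[OF assms])
  obtain a0 where a0: "0 < a0" "a0 < ?w" "?\<Phi> a0 < 0" using supp_dist_vline_low_neg[OF assms(1)] .
  have cont: "continuous_on {a0..?w} ?\<Phi>"
  proof (intro continuous_at_imp_continuous_on ballI)
    fix a assume "a \<in> {a0..?w}"
    then have "sin a \<noteq> 0" using a0 sin_pos_chamber[of a] by auto
    moreover have "isCont (supp_dist C) (vline_point \<epsilon> a)"
      using continuous_on_supp_dist[of UNIV] continuous_on_eq_continuous_at[OF open_UNIV] by blast
    ultimately show "isCont ?\<Phi> a"
      using continuous_at_compose[OF isCont_vline_point] by (simp add: o_def)
  qed
  obtain b where b: "a0 \<le> b" "b \<le> ?w" "?\<Phi> b = 0"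
    using IVT'[of ?\<Phi> a0 0 ?w, OF less_imp_le[OF a0(3)] less_imp_le[OF top] less_imp_le[OF a0(2)] cont]
    by blast
  have "b < ?w" using b top by (cases "b = ?w") auto
  have "0 < b" using a0 b by simp
  have "?\<Phi> a > 0" if ba: "b < a" and aw: "a \<le> ?w" for a
  proof (cases "a = ?w")
    case False
    then have "a < ?w" using aw by simp
    obtain l where l: "0 < l" "l < 1"
      and eq: "vline_point \<epsilon> a = (1 - l) *\<^sub>R vline_point \<epsilon> b + l *\<^sub>R vline_point \<epsilon> ?w"
      using vline_point_between[OF \<open>0 < b\<close> ba \<open>a < ?w\<close> wall_less_pi assms(1)] .
    have "(1 - l) * ?\<Phi> b + l * ?\<Phi> ?w \<le> ?\<Phi> a"
      using supp_dist_concave[of l "vline_point \<epsilon> b" "vline_point \<epsilon> ?w"] l by (simp add: eq)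
    moreover have "0 < l * ?\<Phi> ?w" using l top by simp
    ultimately show ?thesis using b(3) by simp
  qed (use top in simp)
  then show ?thesis using that[of b] \<open>0 < b\<close> \<open>b < ?w\<close> b(3) by blast
qed

lemma continuous_on_cos_argmin:
  fixes \<gamma> :: "real \<Rightarrow> pt"
  assumes "continuous_on A \<gamma>" and "\<And>s. s \<in> A \<Longrightarrow> unique_foot C (\<gamma> s)"
    and "\<And>s. s \<in> A \<Longrightarrow> supp_gap C (\<gamma> s) (\<theta> s) = supp_dist C (\<gamma> s)"
  shows "continuous_on A (\<lambda>s. cos (\<theta> s))"
  unfolding continuous_on_iff
proof (intro ballI allI impI)
  fix s0 e :: real assume s0: "s0 \<in> A" and e: "e > 0"
  obtain d1 where d1: "d1 > 0"
    "\<forall>q t. dist q (\<gamma> s0) < d1 \<longrightarrow> supp_gap C q t = supp_dist C q \<longrightarrow> angle_dist t (\<theta> s0) < e"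
    using argmin_angle_stable[OF assms(2,3)[OF s0] e] by blast
  have "\<exists>d>0. \<forall>s\<in>A. dist s s0 < d \<longrightarrow> dist (\<gamma> s) (\<gamma> s0) < d1"
    using assms(1) s0 d1(1) unfolding continuous_on_iff by blast
  then obtain d2 where d2: "d2 > 0" "\<forall>s\<in>A. dist s s0 < d2 \<longrightarrow> dist (\<gamma> s) (\<gamma> s0) < d1"
    by blast
  have "dist (cos (\<theta> s)) (cos (\<theta> s0)) < e" if "s \<in> A" "dist s s0 < d2" for s
  proof -
    have "dist (\<gamma> s) (\<gamma> s0) < d1" using d2(2) that by blast
    then have "angle_dist (\<theta> s) (\<theta> s0) < e" using d1(2) assms(3)[OF that(1)] by blast
    then show ?thesis unfolding angle_dist_def dist_real_def by linarith
  qed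
  then show "\<exists>d>0. \<forall>s\<in>A. dist s s0 < d \<longrightarrow> dist (cos (\<theta> s)) (cos (\<theta> s0)) < e"
    using d2(1) by blast
qed

lemma chamber_argmin_on_wall:
  assumes u: "unique_foot C (r *\<^sub>R outer_normal (pi / real n))"
    and t: "0 \<le> t" "t \<le> pi / real n"
    and m: "supp_gap C (r *\<^sub>R outer_normal (pi / real n)) t = supp_dist C (r *\<^sub>R outer_normal (pi / real n))"
  shows "t = pi / real n"
proof -
  let ?p = "r *\<^sub>R outer_normal (pi / real n)"
  have step: "rot_step n = 2 * (pi / real n)" using rot_step_half by simp
  have p1: "?p = r *\<^sub>R outer_normal (1 * (pi / real n) + real_of_int 0 * rot_step n)" by simp
  have p2: "?p = r *\<^sub>R outer_normal ((-1) * (pi / real n) + real_of_int 1 * rot_step n)"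
    by (simp add: step)
  have "supp_gap C ?p ((-1) * t + real_of_int 1 * rot_step n) = polar_gap C r (pi / real n) t"
    by (rule supp_gap_chamber[OF _ p2]) simp
  also have "\<dots> = supp_gap C ?p (1 * t + real_of_int 0 * rot_step n)"
    by (rule supp_gap_chamber[OF _ p1, symmetric]) simp
  finally have "supp_gap C ?p (rot_step n - t) = supp_dist C ?p" using m by simp
  then have "cos (rot_step n - t) = cos t" using u m unfolding unique_foot_def by blast
  then have "rot_step n - t = t"
    by (rule cos_inj_pi[rotated 4]) (use t step wall_le_pi_half in linarith)+
  then show ?thesis using step by simp
qed

lemma chamber_argmin:
  assumes u: "unique_foot C p" and ex: "\<exists>t\<in>{0..pi / real n}. supp_gap C p t = supp_dist C p"
  shows "chamber_argmin n C p \<in> {0..pi / real n} \<and> supp_gap C p (chamber_argmin n C p) = supp_dist C p"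
proof -
  obtain t0 where t0: "t0 \<in> {0..pi / real n}" "supp_gap C p t0 = supp_dist C p" using ex by blast
  have t0_unique: "t = t0" if "t \<in> {0..pi / real n}" "supp_gap C p t = supp_dist C p" for t
  proof -
    have "sin t = sin t0 \<and> cos t = cos t0"
      using u[unfolded unique_foot_def, rule_format, OF that(2) t0(2)] .
    moreover have "0 \<le> t" "t \<le> pi / real n" "0 \<le> t0" "t0 \<le> pi / real n" using that(1) t0(1) by auto
    ultimately show ?thesis using chamber_angle_eq by blast
  qed
  have "chamber_argmin n C p = t0"
    unfolding chamber_argmin_def by (rule the_equality) (use t0 t0_unique in blast)+
  then show ?thesis using t0 by simp
qed

lemma chamber_argmin_of_image_less:
  assumes "supp_dist C p = 0" and t: "t \<in> {0..pi / real n}" "supp_gap C p t = supp_dist C p"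
    and \<theta>: "0 \<le> \<theta>" "\<theta> \<le> pi / real n" and less: "fst p < fst (C \<theta>)"
  shows "t < \<theta>"
proof (rule ccontr)
  assume "\<not> t < \<theta>"
  have "supp_gap' C p t = 0" using t(2) supp_gap'_argmin by blast
  then have "p = C t"
    using t(2) assms(1) by (intro curve_eq_of_tangent_coords) (auto simp: supp_gap_eq supp_gap'_def)
  moreover have "\<theta> \<le> t" using \<open>\<not> t < \<theta>\<close> by simp
  ultimately show False using fst_curve_strict_mono[of \<theta> t] \<theta> t(1) less by (cases "\<theta> = t") auto
qed

lemma vline_argmin_hits:
  assumes H: "\<And>r a. r > 0 \<Longrightarrow> 0 < a \<Longrightarrow> a \<le> pi / real n \<Longrightarrow> supp_dist C (r *\<^sub>R outer_normal a) > 0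
      \<Longrightarrow> unique_foot C (r *\<^sub>R outer_normal a)"
    and \<theta>: "0 < \<theta>" "\<theta> < pi / real n"
    and \<epsilon>: "0 < \<epsilon>" "\<epsilon> < fst (C \<theta>)" "\<epsilon> \<le> supp_dist C 0 * sin (pi / real n) / 2"
  obtains a where "sin a \<noteq> 0" "supp_gap C (vline_point \<epsilon> a) \<theta> = supp_dist C (vline_point \<epsilon> a)"
proof -
  let ?w = "pi / real n" and ?P = "vline_point \<epsilon>"
  define Th where "Th a = chamber_argmin n C (?P a)" for a
  obtain b where b: "0 < b" "b < ?w" "supp_dist C (?P b) = 0"
    and pos: "\<And>a. b < a \<Longrightarrow> a \<le> ?w \<Longrightarrow> supp_dist C (?P a) > 0"
    using vline_boundary_crossing[OF \<epsilon>(1,3)] by blast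
  have sin_pos: "sin a > 0" if "a \<in> {b..?w}" for a
    using that b(1) by (intro sin_pos_chamber) auto
  have uniq: "unique_foot C (?P a)" if a: "a \<in> {b..?w}" for a
  proof (cases "a = b")
    case True
    then show ?thesis using unique_foot_image b(3) by simp
  next
    case False
    then have "supp_dist C ((\<epsilon> / sin a) *\<^sub>R outer_normal a) > 0"
      using pos[of a] a by (simp add: vline_point_def)
    then show ?thesis
      unfolding vline_point_def using a b(1) sin_pos[OF a] \<epsilon>(1) by (intro H) auto
  qed
  have Th: "Th a \<in> {0..?w} \<and> supp_gap C (?P a) (Th a) = supp_dist C (?P a)" if a: "a \<in> {b..?w}" for a
    unfolding Th_def
  proof (rule chamber_argmin[OF uniq[OF a]])
    have "\<epsilon> / sin a \<ge> 0" "0 \<le> a" "a \<le> ?w" using sin_pos[OF a] \<epsilon>(1) a b(1) by auto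
    then show "\<exists>t\<in>{0..?w}. supp_gap C (?P a) t = supp_dist C (?P a)"
      unfolding vline_point_def by (rule exists_chamber_argmin)
  qed
  have b_in: "b \<in> {b..?w}" and w_in: "?w \<in> {b..?w}" using b by auto
  have "continuous_on {b..?w} ?P"
    by (intro continuous_at_imp_continuous_on ballI isCont_vline_point) (use sin_pos in fastforce)
  then have cont: "continuous_on {b..?w} (\<lambda>a. cos (Th a))"
    by (rule continuous_on_cos_argmin[OF _ uniq]) (use Th in auto)
  have "Th ?w = ?w"
    using chamber_argmin_on_wall[of "\<epsilon> / sin ?w" "Th ?w"] uniq[OF w_in] Th[OF w_in]
    unfolding vline_point_def by auto
  have "Th b < \<theta>"
    using chamber_argmin_of_image_less[OF b(3)] Th[OF b_in] \<theta> \<epsilon>(2) fst_vline_point sin_pos[OF b_in]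
    by (metis less_imp_le less_irrefl)
  have "cos (Th ?w) \<le> cos \<theta>"
    unfolding \<open>Th ?w = ?w\<close> using \<theta> wall_less_pi by (intro cos_monotone_0_pi_le) auto
  moreover have "cos \<theta> \<le> cos (Th b)"
    using \<open>Th b < \<theta>\<close> Th[OF b_in] \<theta> wall_less_pi by (intro cos_monotone_0_pi_le) auto
  ultimately obtain a where a: "b \<le> a" "a \<le> ?w" "cos (Th a) = cos \<theta>"
    using IVT2'[of "\<lambda>a. cos (Th a)" ?w "cos \<theta>" b, OF _ _ _ cont] b(2) by auto
  then have a_in: "a \<in> {b..?w}" by simp
  have "Th a = \<theta>"
    by (rule cos_inj_pi[OF _ _ _ _ a(3)]) (use Th[OF a_in] \<theta> wall_less_pi in auto)
  then show ?thesis using that[of a] Th[OF a_in] sin_pos[OF a_in] by simp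
qed

lemma axis_height_mono_open:
  assumes H: "\<And>r a. r > 0 \<Longrightarrow> 0 < a \<Longrightarrow> a \<le> pi / real n \<Longrightarrow> supp_dist C (r *\<^sub>R outer_normal a) > 0
      \<Longrightarrow> unique_foot C (r *\<^sub>R outer_normal a)"
    and t: "0 < t1" "t1 < t2" "t2 < pi / real n"
  shows "axis_height C t1 \<le> axis_height C t2"
proof (rule ccontr)
  assume "\<not> ?thesis"
  then have \<delta>: "axis_height C t1 - axis_height C t2 > 0" by simp
  define K where "K = cos t1 / sin t1 - cos t2 / sin t2"
  have K: "K > 0" unfolding K_def using cot_strict_decreasing[of t1 t2] t wall_less_pi by simp
  have x: "0 < fst (C t1)" "fst (C t1) < fst (C t2)"
    using fst_curve_strict_mono[of 0 t1] fst_curve_strict_mono[of t1 t2] fst_curve_0 t by auto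
  have "0 < min (supp_dist C 0 * sin (pi / real n) / 2) ((axis_height C t1 - axis_height C t2) / K)"
    using supp_dist_origin_pos sin_pos_chamber[OF wall_pos order_refl] \<delta> K by simp
  \<comment> \<open>Small enough for both \<open>t1\<close> and \<open>t2\<close> to be minimising angles on the line \<open>x = \<epsilon>\<close>,
    and for the correction \<open>\<epsilon> K\<close> to stay below the drop of \<open>\<Pi>\<close>.\<close>
  then obtain \<epsilon> where \<epsilon>: "0 < \<epsilon>" "\<epsilon> < fst (C t1)"
    "\<epsilon> < min (supp_dist C 0 * sin (pi / real n) / 2) ((axis_height C t1 - axis_height C t2) / K)"
    using field_lbound_gt_zero[OF x(1)] by blast
  then have \<epsilon>_wall: "\<epsilon> \<le> supp_dist C 0 * sin (pi / real n) / 2"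
    and \<epsilon>_K: "\<epsilon> * K < axis_height C t1 - axis_height C t2"
    using K by (simp_all add: pos_less_divide_eq)
  have "0 < t2" "\<epsilon> < fst (C t2)" using t x \<epsilon>(2) by auto
  obtain a1 where a1: "sin a1 \<noteq> 0" "supp_gap C (vline_point \<epsilon> a1) t1 = supp_dist C (vline_point \<epsilon> a1)"
    using vline_argmin_hits[OF H t(1) _ \<epsilon>(1,2) \<epsilon>_wall] t by auto
  obtain a2 where a2: "sin a2 \<noteq> 0" "supp_gap C (vline_point \<epsilon> a2) t2 = supp_dist C (vline_point \<epsilon> a2)"
    using vline_argmin_hits[OF H \<open>0 < t2\<close> t(3) \<epsilon>(1) \<open>\<epsilon> < fst (C t2)\<close> \<epsilon>_wall] by blast
  have "axis_height C t1 - \<epsilon> * (cos t1 / sin t1) \<le> axis_height C t2 - \<epsilon> * (cos t2 / sin t2)"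
    using vline_argmins_ordered[OF a1(1) a2(1) t(1,2) _ a1(2) a2(2)] t wall_less_pi by linarith
  then show False using \<epsilon>_K unfolding K_def by (simp add: algebra_simps)
qed

lemma axis_height_mono:
  assumes core: "\<And>t1 t2. 0 < t1 \<Longrightarrow> t1 < t2 \<Longrightarrow> t2 < pi / real n \<Longrightarrow> axis_height C t1 \<le> axis_height C t2"
    and ab: "0 < a" "a \<le> b" "b \<le> pi / real n"
  shows "axis_height C a \<le> axis_height C b"
proof (cases "a = b")
  case True then show ?thesis by simp
next
  case False
  then have alb: "a < b" using ab by simp
  show ?thesis
  proof (cases "b < pi / real n")
    case True then show ?thesis using core ab alb by simp
  next
    case False
    then have b: "b = pi / real n" using ab by simp
    have sb: "sin b \<noteq> 0" using sin_pos_chamber wall_pos b by (metis less_irrefl order_refl)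
    have "(axis_height C \<longlongrightarrow> axis_height C b) (at_left b)"
      using isCont_axis_height[OF sb] unfolding isCont_def by (rule tendsto_mono[OF at_le, rotated]) simp
    moreover have "\<forall>\<^sub>F s in at_left b. axis_height C a \<le> axis_height C s"
      unfolding eventually_at_left_field
      by (intro exI[of _ a] conjI alb allI impI) (use core ab b in auto)
    ultimately show ?thesis by (rule tendsto_lowerbound) simp
  qed
qed

lemma axis_limit_le_axis_height:
  assumes core: "\<And>t1 t2. 0 < t1 \<Longrightarrow> t1 < t2 \<Longrightarrow> t2 < pi / real n \<Longrightarrow> axis_height C t1 \<le> axis_height C t2"
    and b: "0 < b" "b \<le> pi / real n"
  shows "curv_radius C 0 - support_fn C 0 \<le> axis_height C b"
proof -
  have "(axis_height C \<longlongrightarrow> curv_radius C 0 - support_fn C 0) (at_right 0)"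
    using axis_height_tendsto_0 by (rule tendsto_mono[OF at_le, rotated]) simp
  moreover have "\<forall>\<^sub>F s in at_right 0. axis_height C s \<le> axis_height C b"
    unfolding eventually_at_right_field
    by (intro exI[of _ b] conjI b(1) allI impI) (rule axis_height_mono[OF core], use b in auto)
  ultimately show ?thesis by (rule tendsto_upperbound) simp
qed

lemma unique_foot_in_sector_if_star_skeleton:
  assumes sk: "skeleton C = axis_star n L"
    and r: "r > 0" and a: "0 < a" "a \<le> pi / real n" and pos: "supp_dist C (r *\<^sub>R outer_normal a) > 0"
  shows "unique_foot C (r *\<^sub>R outer_normal a)"
proof (rule ccontr)
  assume nu: "\<not> unique_foot C (r *\<^sub>R outer_normal a)"
  have dom: "r *\<^sub>R outer_normal a \<in> domain C" using pos domain_eq_supp_dist_pos by simp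
  then have "r *\<^sub>R outer_normal a \<in> singular_set" using infdist_differentiable_iff_unique_foot[OF dom] nu by simp
  then have "r *\<^sub>R outer_normal a \<in> skeleton C" unfolding skeleton_eq by (rule closure_subset[THEN subsetD])
  then show False using sk sector_not_in_axis_star[OF r a] by simp
qed

lemma mono_PiC_ext_if_axis_height_mono:
  assumes core: "\<And>t1 t2. 0 < t1 \<Longrightarrow> t1 < t2 \<Longrightarrow> t2 < pi / real n \<Longrightarrow> axis_height C t1 \<le> axis_height C t2"
  shows "mono_on {0..pi / real n} (PiC_ext C)"
proof (rule mono_onI)
  fix r s assume rs: "r \<in> {0..pi / real n}" "s \<in> {0..pi / real n}" "r \<le> s"
  have Pi_s: "PiC_ext C s = axis_height C s" if "0 < s" using PiC_ext_pos[OF that] rs wall_less_pi by simp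
  show "PiC_ext C r \<le> PiC_ext C s"
  proof (cases "r = 0")
    case True
    show ?thesis
    proof (cases "s = 0")
      case False
      then have "0 < s" using rs by simp
      then show ?thesis using True Pi_s axis_limit_le_axis_height[OF core] rs PiC_ext_0 by simp
    qed (use True in simp)
  next
    case False
    then have "0 < r" using rs by simp
    then show ?thesis
      using axis_height_mono[OF core \<open>0 < r\<close>] rs Pi_s PiC_ext_pos[of r] wall_less_pi by simp
  qed
qed

lemma mono_if_skeleton:
  assumes "\<exists>y\<ge>0. skeleton C = Gn_orbit n ({0} \<times> {-y..0})"
  shows "mono_on {0..pi / real n} (PiC_ext C)"
proof -
  obtain y where sk: "skeleton C = axis_star n (- y)" using assms Gn_orbit_axis_segment[OF n_pos] by auto
  have "axis_height C t1 \<le> axis_height C t2" if "0 < t1" "t1 < t2" "t2 < pi / real n" for t1 t2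
    by (rule axis_height_mono_open[OF unique_foot_in_sector_if_star_skeleton[OF sk] that])
  then show ?thesis by (rule mono_PiC_ext_if_axis_height_mono)
qed

end

theorem proposition5p4:
  fixes n :: nat and C :: "real \<Rightarrow> real \<times> real"
  assumes "n \<ge> 2" and "curve_class C" and "sym_class n C"
  shows "(mono_on {0..pi / real n} (PiC_ext C) \<longrightarrow>
            skeleton C = Gn_orbit n ({0} \<times> {PiC_ext C 0..0}))
       \<and> ((\<exists>y\<ge>0. skeleton C = Gn_orbit n ({0} \<times> {-y..0})) \<longrightarrow>
            mono_on {0..pi / real n} (PiC_ext C))"
proof -
  interpret symmetric_curve n C using assms by (unfold_locales) auto
  show ?thesis using skeleton_if_mono mono_if_skeleton by blast
qed

end
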